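(* Let $M\in\mathbb{R}^{p\times q}_+$ be a nonnegative matrix with $\operatorname{rank}_{\mathrm{psd}}(M)=2$ and $\operatorname{rank}(M)=3$. Then the quotient space $\mathcal{SF}(M)/GL(2)$ is connected. *)

theory Defs
  imports "HOL-Analysis.Analysis"
begin

definition psd_mat :: "nat \<Rightarrow> (nat \<Rightarrow> nat \<Rightarrow> real) \<Rightarrow> bool" where
  "psd_mat k A \<longleftrightarrow> (\<forall>i<k. \<forall>j<k. A i j = A j i) \<and>
     (\<forall>x::nat \<Rightarrow> real. 0 \<le> (\<Sum>i<k. \<Sum>j<k. x i * A i j * x j))"

definition has_psd_factorization :: "nat \<Rightarrow> real^'q^'p \<Rightarrow> bool" where
  "has_psd_factorization k M \<longleftrightarrow>
     (\<exists>(A :: 'p \<Rightarrow> nat \<Rightarrow> nat \<Rightarrow> real) (B :: 'q \<Rightarrow> nat \<Rightarrow> nat \<Rightarrow> real).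
        (\<forall>i. psd_mat k (A i)) \<and> (\<forall>j. psd_mat k (B j)) \<and>
        (\<forall>i j. M $ i $ j = (\<Sum>a<k. \<Sum>b<k. A i a b * B j b a)))"

definition psd_rank :: "real^'q^'p \<Rightarrow> nat" where
  "psd_rank M = (LEAST k. has_psd_factorization k M)"

definition psd2 :: "real^2^2 \<Rightarrow> bool" where
  "psd2 A \<longleftrightarrow> transpose A = A \<and> (\<forall>x. 0 \<le> x \<bullet> (A *v x))"

definition SF2 :: "real^'q^'p \<Rightarrow> (('p \<Rightarrow> real^2^2) \<times> ('q \<Rightarrow> real^2^2)) set" where
  "SF2 M = {(A, B). (\<forall>i. psd2 (A i)) \<and> (\<forall>j. psd2 (B j)) \<and>
                    (\<forall>i j. M $ i $ j = trace (A i ** B j))}"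

definition GL2_act :: "real^2^2 \<Rightarrow> ('p \<Rightarrow> real^2^2) \<times> ('q \<Rightarrow> real^2^2)
                        \<Rightarrow> ('p \<Rightarrow> real^2^2) \<times> ('q \<Rightarrow> real^2^2)" where
  "GL2_act g AB = ((\<lambda>i. g ** fst AB i ** transpose g),
                   (\<lambda>j. transpose (matrix_inv g) ** snd AB j ** matrix_inv g))"

definition GL2_orbit_rel :: "real^'q^'p \<Rightarrow>
    ((('p \<Rightarrow> real^2^2) \<times> ('q \<Rightarrow> real^2^2)) \<times> (('p \<Rightarrow> real^2^2) \<times> ('q \<Rightarrow> real^2^2))) set" where
  "GL2_orbit_rel M = {(x, y). x \<in> SF2 M \<and> y \<in> SF2 M \<and> (\<exists>g. invertible g \<and> y = GL2_act g x)}"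

definition quotient_topology :: "'a topology \<Rightarrow> ('a \<times> 'a) set \<Rightarrow> 'a set topology" where
  "quotient_topology X R = topology (\<lambda>U. U \<subseteq> topspace X // R \<and> openin X (\<Union>U))"

definition SF2_mod_GL2 :: "real^'q^'p \<Rightarrow> (('p \<Rightarrow> real^2^2) \<times> ('q \<Rightarrow> real^2^2)) set topology" where
  "SF2_mod_GL2 M = quotient_topology (top_of_set (SF2 M)) (GL2_orbit_rel M)"


lemma istopology_quotient:
  assumes "equiv (topspace X) R"
  shows "istopology (\<lambda>U. U \<subseteq> topspace X // R \<and> openin X (\<Union>U))"
  unfolding istopology_def
proof (intro conjI allI impI)
  fix S T :: "'a set set"
  assume S: "S \<subseteq> topspace X // R \<and> openin X (\<Union>S)"
     and T: "T \<subseteq> topspace X // R \<and> openin X (\<Union>T)"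
  have eq: "\<Union>(S \<inter> T) = \<Union>S \<inter> \<Union>T"
  proof
    show "\<Union>S \<inter> \<Union>T \<subseteq> \<Union>(S \<inter> T)"
    proof
      fix x assume "x \<in> \<Union>S \<inter> \<Union>T"
      then obtain a b where ab: "a \<in> S" "b \<in> T" "x \<in> a" "x \<in> b" by blast
      then have "a \<in> topspace X // R" "b \<in> topspace X // R" using S T by auto
      then have "a = b" using ab assms quotient_disj by fastforce
      then show "x \<in> \<Union>(S \<inter> T)" using ab by blast
    qed
  qed blast
  have "openin X (\<Union>S \<inter> \<Union>T)" using S T by (intro openin_Int) auto
  then show "openin X (\<Union>(S \<inter> T))" by (subst eq)
  show "S \<inter> T \<subseteq> topspace X // R" using S by blast
next
  fix K :: "'a set set set"
  assume "\<forall>S\<in>K. S \<subseteq> topspace X // R \<and> openin X (\<Union>S)"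
  then show "\<Union>K \<subseteq> topspace X // R" by blast
  have "\<Union>(\<Union>K) = (\<Union>S\<in>K. \<Union>S)" by blast
  moreover have "openin X (\<Union>S\<in>K. \<Union>S)" using \<open>\<forall>S\<in>K. _\<close> by (intro openin_Union) auto
  ultimately show "openin X (\<Union>(\<Union>K))" by simp
qed

lemma openin_quotient_topology:
  assumes "equiv (topspace X) R"
  shows "openin (quotient_topology X R) U \<longleftrightarrow> U \<subseteq> topspace X // R \<and> openin X (\<Union>U)"
  unfolding quotient_topology_def using istopology_quotient[OF assms]
  by (simp add: topology_inverse')

end

theory Submission
  imports Defs
begin

(* A symmetric 2x2 matrix X is encoded by its Lorentz coordinates coords X in R^3; then the psd
   cone becomes the self-dual Lorentz cone {v. |(v2, v3)| <= v1} and trace (X Y) = 2 <coords X, coords Y>.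
   A factorization (A, B) in SF(M) is thus a pair of families of cone vectors a_i, b_j with
   M_ij = 2 <a_i, b_j>, and rank M = 3 forces both families to span R^3.

   The theorem follows from (2), (3), (4) and (6). *)

section \<open>Lorentz coordinates of symmetric 2x2 matrices\<close>

definition sym_of :: "real^3 \<Rightarrow> real^2^2" where
  "sym_of v = (\<chi> i j. if i = 1 \<and> j = 1 then v$1 + v$2 else if i = 2 \<and> j = 2 then v$1 - v$2 else v$3)"

definition coords :: "real^2^2 \<Rightarrow> real^3" where
  "coords X = vector [(X$1$1 + X$2$2)/2, (X$1$1 - X$2$2)/2, X$1$2]"

definition in_cone :: "real^3 \<Rightarrow> bool" where
  "in_cone v \<longleftrightarrow> 0 \<le> v$1 \<and> (v$2)\<^sup>2 + (v$3)\<^sup>2 \<le> (v$1)\<^sup>2"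

lemma sym_of_entries [simp]:
  "sym_of v $ 1 $ 1 = v$1 + v$2" "sym_of v $ 2 $ 2 = v$1 - v$2"
  "sym_of v $ 1 $ 2 = v$3" "sym_of v $ 2 $ 1 = v$3"
  by (simp_all add: sym_of_def)

lemma coords_entries [simp]:
  "coords X $ 1 = (X$1$1 + X$2$2)/2" "coords X $ 2 = (X$1$1 - X$2$2)/2" "coords X $ 3 = X$1$2"
  by (simp_all add: coords_def)

lemma mat2_eq_iff:
  "(A::real^2^2) = B \<longleftrightarrow> A$1$1 = B$1$1 \<and> A$1$2 = B$1$2 \<and> A$2$1 = B$2$1 \<and> A$2$2 = B$2$2"
  by (auto simp: vec_eq_iff forall_2)

lemma vec3_eq_iff: "(u::real^3) = v \<longleftrightarrow> u$1 = v$1 \<and> u$2 = v$2 \<and> u$3 = v$3"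
  by (auto simp: vec_eq_iff forall_3)

lemma inner3: "(u::real^3) \<bullet> v = u$1 * v$1 + u$2 * v$2 + u$3 * v$3"
  by (simp add: inner_vec_def sum_3)

lemma inner2: "(u::real^2) \<bullet> v = u$1 * v$1 + u$2 * v$2"
  by (simp add: inner_vec_def sum_2)

lemma transpose_nth [simp]: "transpose A $ i $ j = A $ j $ i"
  by (simp add: transpose_def)

lemma transpose_sym_of [simp]: "transpose (sym_of v) = sym_of v"
  unfolding mat2_eq_iff by simp

lemma coords_sym_of [simp]: "coords (sym_of v) = v"
  unfolding vec3_eq_iff by simp

lemma sym_of_coords:
  assumes "transpose X = X" shows "sym_of (coords X) = (X::real^2^2)"
proof -
  have "X$1$2 = X$2$1" using assms by (metis transpose_nth)
  then show ?thesis unfolding mat2_eq_iff by (simp add: field_simps)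
qed

lemma coords_sum: "coords (\<Sum>i\<in>S. A i) = (\<Sum>i\<in>S. coords (A i))"
  by (simp add: vec3_eq_iff sum_component sum.distrib sum_subtractf flip: sum_divide_distrib)

lemma coords_mat1: "coords (mat 1 :: real^2^2) = vector [1, 0, 0]"
  by (simp add: vec3_eq_iff mat_def)

lemma trace_sym_of: "trace (sym_of u ** sym_of v) = 2 * (u \<bullet> v)"
  by (simp add: trace_def matrix_matrix_mult_def sum_2 inner3 algebra_simps)

lemma binary_form_nonneg_imp:
  fixes p r c :: real
  assumes q: "\<And>x y. 0 \<le> p * x\<^sup>2 + 2 * c * x * y + r * y\<^sup>2"
  shows "0 \<le> p \<and> 0 \<le> r \<and> c\<^sup>2 \<le> p * r"
proof -
  have p: "0 \<le> p" using q[of 1 0] by simp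
  have r: "0 \<le> r" using q[of 0 1] by simp
  have "c\<^sup>2 \<le> p * r"
  proof (cases "p = 0")
    case True
    have "c = 0"
    proof (rule ccontr)
      assume c: "c \<noteq> 0"
      have "0 \<le> 2 * c * (- (r + 1) / (2 * c)) + r"
        using q[of "- (r + 1) / (2 * c)" 1] True by simp
      also have "\<dots> = -1" using c by (simp add: field_simps)
      finally show False by simp
    qed
    then show ?thesis using True by simp
  next
    case False
    then have pp: "0 < p" using p by simp
    have "0 \<le> p * c\<^sup>2 + 2 * c * c * (- p) + r * p\<^sup>2"
      using q[of c "- p"] by (simp add: power2_eq_square algebra_simps)
    also have "\<dots> = p * (p * r - c\<^sup>2)" by (simp add: power2_eq_square algebra_simps)
    finally show ?thesis using pp by (simp add: zero_le_mult_iff)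
  qed
  then show ?thesis using p r by simp
qed

lemma binary_form_nonneg:
  fixes p r c x y :: real
  assumes "0 \<le> p" "0 \<le> r" "c\<^sup>2 \<le> p * r"
  shows "0 \<le> p * x\<^sup>2 + 2 * c * x * y + r * y\<^sup>2"
proof (cases "p = 0")
  case True
  then have "c = 0" using assms by simp
  then show ?thesis using True assms by simp
next
  case False
  then have pp: "p > 0" using assms by simp
  have "p * (p * x\<^sup>2 + 2 * c * x * y + r * y\<^sup>2) = (p * x + c * y)\<^sup>2 + (p * r - c\<^sup>2) * y\<^sup>2"
    by (simp add: power2_eq_square algebra_simps)
  also have "\<dots> \<ge> 0" using assms by simp
  finally show ?thesis using pp by (simp add: zero_le_mult_iff)
qed

lemma binary_form_nonneg_iff:
  fixes p r c :: real
  shows "(\<forall>x y. 0 \<le> p * x\<^sup>2 + 2 * c * x * y + r * y\<^sup>2) \<longleftrightarrow> 0 \<le> p \<and> 0 \<le> r \<and> c\<^sup>2 \<le> p * r"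
  using binary_form_nonneg_imp binary_form_nonneg by blast

lemma psd2_sym_of: "psd2 (sym_of v) \<longleftrightarrow> in_cone v"
proof -
  define f where "f a b = (v$1 + v$2) * a\<^sup>2 + 2 * v$3 * a * b + (v$1 - v$2) * b\<^sup>2" for a b
  have quad: "x \<bullet> (sym_of v *v x) = f (x$1) (x$2)" for x :: "real^2"
    by (simp add: f_def inner2 matrix_vector_mult_def sum_2 power2_eq_square algebra_simps)
  have "psd2 (sym_of v) \<longleftrightarrow> (\<forall>a b. 0 \<le> f a b)"
  proof
    assume "psd2 (sym_of v)"
    then have "0 \<le> f (x$1) (x$2)" for x :: "real^2" by (simp add: psd2_def quad)
    from this[of "vector [a, b]" for a b] show "\<forall>a b. 0 \<le> f a b" by simp
  qed (simp add: psd2_def quad)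
  also have "\<dots> \<longleftrightarrow> 0 \<le> v$1 + v$2 \<and> 0 \<le> v$1 - v$2 \<and> (v$3)\<^sup>2 \<le> (v$1)\<^sup>2 - (v$2)\<^sup>2"
  proof -
    have "(v$1 + v$2) * (v$1 - v$2) = (v$1)\<^sup>2 - (v$2)\<^sup>2" by (simp add: power2_eq_square algebra_simps)
    then show ?thesis unfolding f_def binary_form_nonneg_iff by (simp only:)
  qed
  also have "\<dots> \<longleftrightarrow> in_cone v"
  proof
    assume "in_cone v"
    then have v1: "0 \<le> v$1" and le: "(v$2)\<^sup>2 + (v$3)\<^sup>2 \<le> (v$1)\<^sup>2" by (auto simp: in_cone_def)
    have "\<bar>v$2\<bar>\<^sup>2 \<le> (v$1)\<^sup>2"
      unfolding power2_abs using le zero_le_power2[of "v$3"] by linarith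
    then have "\<bar>v$2\<bar> \<le> v$1" using v1 by (rule power2_le_imp_le)
    then show "0 \<le> v$1 + v$2 \<and> 0 \<le> v$1 - v$2 \<and> (v$3)\<^sup>2 \<le> (v$1)\<^sup>2 - (v$2)\<^sup>2"
      using le by linarith
  next
    assume "0 \<le> v$1 + v$2 \<and> 0 \<le> v$1 - v$2 \<and> (v$3)\<^sup>2 \<le> (v$1)\<^sup>2 - (v$2)\<^sup>2"
    then show "in_cone v" unfolding in_cone_def by linarith
  qed
  finally show ?thesis .
qed

lemma in_cone_reverse_cauchy_schwarz:
  assumes "in_cone u" "in_cone v"
  shows "u$2 * v$2 + u$3 * v$3 \<le> u$1 * v$1"
proof -
  have "(u$2 * v$2 + u$3 * v$3)\<^sup>2 \<le> ((u$2)\<^sup>2 + (u$3)\<^sup>2) * ((v$2)\<^sup>2 + (v$3)\<^sup>2)"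
  proof -
    have "0 \<le> (u$2 * v$3 - u$3 * v$2)\<^sup>2" by simp
    then show ?thesis by (simp add: power2_eq_square algebra_simps)
  qed
  also have "\<dots> \<le> (u$1)\<^sup>2 * (v$1)\<^sup>2"
    using assms by (intro mult_mono) (auto simp: in_cone_def)
  also have "\<dots> = (u$1 * v$1)\<^sup>2" by (simp add: power_mult_distrib)
  finally have "(u$2 * v$2 + u$3 * v$3)\<^sup>2 \<le> (u$1 * v$1)\<^sup>2" .
  moreover have "0 \<le> u$1 * v$1" using assms by (simp add: in_cone_def)
  ultimately show ?thesis by (rule power2_le_imp_le)
qed

lemma in_cone_inner_nonneg: "in_cone u \<Longrightarrow> in_cone v \<Longrightarrow> 0 \<le> u \<bullet> v"
proof -
  assume a: "in_cone u" "in_cone v"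
  have "- (u$2 * v$2 + u$3 * v$3) \<le> u$1 * v$1"
    using in_cone_reverse_cauchy_schwarz[of u "vector [v$1, -(v$2), -(v$3)]"] a by (simp add: in_cone_def)
  then show ?thesis by (simp add: inner3)
qed

lemma in_cone_dual:
  assumes "\<And>u. in_cone u \<Longrightarrow> 0 \<le> u \<bullet> y"
  shows "in_cone y"
proof (rule ccontr)
  assume n: "\<not> in_cone y"
  define r where "r = sqrt ((y$2)\<^sup>2 + (y$3)\<^sup>2)"
  have r0: "0 \<le> r" by (simp add: r_def)
  have rr: "r\<^sup>2 = (y$2)\<^sup>2 + (y$3)\<^sup>2" by (simp add: r_def)
  have lt: "y$1 < r"
  proof (rule ccontr)
    assume "\<not> y$1 < r"
    then have "r \<le> y$1" by simp
    then have "r\<^sup>2 \<le> (y$1)\<^sup>2" using r0 by (simp add: power_mono)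
    then show False using n \<open>r \<le> y$1\<close> r0 rr by (simp add: in_cone_def)
  qed
  show False
  proof (cases "r = 0")
    case True
    have "0 \<le> vector [1,0,0] \<bullet> y" by (rule assms) (simp add: in_cone_def)
    then show False using lt True by (simp add: inner3)
  next
    case False
    have "in_cone (vector [r, -(y$2), -(y$3)])" using rr r0 by (simp add: in_cone_def)
    then have "0 \<le> vector [r, -(y$2), -(y$3)] \<bullet> y" by (rule assms)
    then have "0 \<le> r * y$1 - r\<^sup>2" using rr by (simp add: inner3 power2_eq_square)
    moreover have "r * y$1 < r * r" using lt False r0 by simp
    ultimately show False by (simp add: power2_eq_square)
  qed
qed

lemma in_cone_sum:
  assumes "\<And>i. i \<in> S \<Longrightarrow> in_cone (x i)"
  shows "in_cone (\<Sum>i\<in>S. x i)"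
proof (rule in_cone_dual)
  fix u assume "in_cone u"
  then show "0 \<le> u \<bullet> (\<Sum>i\<in>S. x i)"
    using assms in_cone_inner_nonneg by (simp add: inner_sum_right sum_nonneg)
qed

lemma in_cone_zero_first: "in_cone v \<Longrightarrow> v$1 = 0 \<Longrightarrow> v = 0"
proof -
  assume a: "in_cone v" "v$1 = 0"
  then have "(v$2)\<^sup>2 + (v$3)\<^sup>2 \<le> 0" by (simp add: in_cone_def)
  then have "v$2 = 0" "v$3 = 0" by (simp_all add: sum_power2_le_zero_iff)
  then show "v = 0" using a by (simp add: vec3_eq_iff)
qed

lemma in_cone_or_neg: "(z$2)\<^sup>2 + (z$3)\<^sup>2 \<le> (z$1)\<^sup>2 \<Longrightarrow> in_cone z \<or> in_cone (- z)"
  by (cases "0 \<le> z$1") (auto simp: in_cone_def)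

text \<open>Basic facts about matrix_inv, which the library defines by choice.\<close>
lemma matrix_inv_props:
  assumes "invertible (g::real^'n^'n)"
  shows "g ** matrix_inv g = mat 1" "matrix_inv g ** g = mat 1"
  using someI_ex[OF assms[unfolded invertible_def]] unfolding matrix_inv_def by auto

lemma matrix_inv_unique:
  assumes "(g::real^'n^'n) ** h = mat 1" shows "matrix_inv g = h"
proof -
  have "invertible g" using assms matrix_left_right_inverse invertible_def by blast
  then have "matrix_inv g = matrix_inv g ** (g ** h)" using assms by simp
  also have "\<dots> = h" using matrix_inv_props(2)[OF \<open>invertible g\<close>] by (simp add: matrix_mul_assoc)
  finally show ?thesis .
qed

lemma invertible_mat1: "invertible (mat 1 :: real^'n^'n)"
  unfolding invertible_def by (rule exI[of _ "mat 1"]) simp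

lemma matrix_inv_mat1: "matrix_inv (mat 1 :: real^'n^'n) = mat 1"
  by (rule matrix_inv_unique) simp

lemma invertible_matrix_inv: assumes "invertible (g::real^'n^'n)" shows "invertible (matrix_inv g)"
  unfolding invertible_def using matrix_inv_props[OF assms] by blast

lemma matrix_inv_mult: assumes "invertible (g::real^'n^'n)" "invertible (h::real^'n^'n)"
  shows "matrix_inv (g ** h) = matrix_inv h ** matrix_inv g"
proof (rule matrix_inv_unique)
  have "(g ** h) ** (matrix_inv h ** matrix_inv g) = g ** (h ** matrix_inv h) ** matrix_inv g"
    by (simp add: matrix_mul_assoc)
  also have "\<dots> = mat 1" using matrix_inv_props[OF assms(1)] matrix_inv_props[OF assms(2)] by simp
  finally show "(g ** h) ** (matrix_inv h ** matrix_inv g) = mat 1" .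
qed

lemma psd2_congr:
  assumes "psd2 X" shows "psd2 (C ** X ** transpose C)"
  unfolding psd2_def
proof (intro conjI allI)
  have "transpose X = X" using assms by (simp add: psd2_def)
  then show "transpose (C ** X ** transpose C) = C ** X ** transpose C"
    by (simp add: matrix_transpose_mul matrix_mul_assoc)
next
  fix x :: "real^2"
  have "x \<bullet> ((C ** X ** transpose C) *v x) = x \<bullet> (C *v (X *v (transpose C *v x)))"
    by (metis matrix_vector_mul_assoc)
  also have "\<dots> = (x v* C) \<bullet> (X *v (transpose C *v x))"
    by (simp add: dot_lmul_matrix)
  also have "\<dots> = (transpose C *v x) \<bullet> (X *v (transpose C *v x))"
    by simp
  also have "\<dots> \<ge> 0" using assms by (simp add: psd2_def)
  finally show "0 \<le> x \<bullet> ((C ** X ** transpose C) *v x)" .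
qed

lemma trace_GL2_invariant:
  assumes "invertible (g::real^2^2)"
  shows "trace ((g ** A ** transpose g) ** (transpose (matrix_inv g) ** B ** matrix_inv g)) = trace (A ** B)"
proof -
  have e: "transpose g ** transpose (matrix_inv g) = mat 1"
    using matrix_inv_props(2)[OF assms] by (metis matrix_transpose_mul transpose_mat)
  have "(g ** A ** transpose g) ** (transpose (matrix_inv g) ** B ** matrix_inv g)
        = g ** A ** (transpose g ** transpose (matrix_inv g)) ** B ** matrix_inv g"
    by (simp only: matrix_mul_assoc)
  also have "\<dots> = g ** (A ** B ** matrix_inv g)" unfolding e
    by (simp only: matrix_mul_assoc matrix_mul_rid)
  finally have conj: "(g ** A ** transpose g) ** (transpose (matrix_inv g) ** B ** matrix_inv g) = g ** (A ** B ** matrix_inv g)" .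
  have "trace (g ** (A ** B ** matrix_inv g)) = trace ((A ** B ** matrix_inv g) ** g)"
    by (rule trace_mul_sym)
  also have "(A ** B ** matrix_inv g) ** g = A ** B ** (matrix_inv g ** g)"
    by (simp only: matrix_mul_assoc)
  also have "\<dots> = A ** B" using matrix_inv_props(2)[OF assms] by (simp only: matrix_mul_rid)
  finally show ?thesis unfolding conj .
qed

lemma GL2_act_SF2:
  assumes "x \<in> SF2 M" "invertible g"
  shows "GL2_act g x \<in> SF2 M"
proof -
  obtain A B where x: "x = (A, B)" by fastforce
  have "psd2 (transpose (matrix_inv g) ** B j ** matrix_inv g)" for j
    using psd2_congr[of "B j" "transpose (matrix_inv g)"] assms x by (simp add: SF2_def)
  moreover have "psd2 (g ** A i ** transpose g)" for i
    using psd2_congr[of "A i" g] assms x by (simp add: SF2_def)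
  ultimately show ?thesis using assms x trace_GL2_invariant[OF assms(2)]
    by (simp add: SF2_def GL2_act_def)
qed

lemma GL2_act_id: "GL2_act (mat 1) x = x"
  by (simp add: GL2_act_def matrix_inv_mat1)

lemma GL2_act_comp:
  assumes "invertible h" "invertible g"
  shows "GL2_act h (GL2_act g x) = GL2_act (h ** g) x"
  using assms by (simp add: GL2_act_def matrix_inv_mult matrix_transpose_mul matrix_mul_assoc)

lemma equiv_GL2_orbit_rel: "equiv (SF2 M) (GL2_orbit_rel M)"
proof (rule equivI)
  show "GL2_orbit_rel M \<subseteq> SF2 M \<times> SF2 M" by (auto simp: GL2_orbit_rel_def)
  show "refl_on (SF2 M) (GL2_orbit_rel M)"
  proof (rule refl_onI)
    fix x assume "x \<in> SF2 M"
    then show "(x, x) \<in> GL2_orbit_rel M"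
      unfolding GL2_orbit_rel_def using GL2_act_id invertible_mat1 by (metis (mono_tags, lifting) case_prodI mem_Collect_eq)
  qed
  show "sym (GL2_orbit_rel M)"
    unfolding sym_def
  proof (intro allI impI)
    fix x y assume "(x, y) \<in> GL2_orbit_rel M"
    then obtain g where x: "x \<in> SF2 M" and y: "y \<in> SF2 M" and g: "invertible g" and yg: "y = GL2_act g x"
      by (auto simp: GL2_orbit_rel_def)
    have "GL2_act (matrix_inv g) y = GL2_act (matrix_inv g ** g) x"
      unfolding yg by (rule GL2_act_comp[OF invertible_matrix_inv[OF g] g])
    also have "\<dots> = x" using matrix_inv_props(2)[OF g] GL2_act_id by simp
    finally show "(y, x) \<in> GL2_orbit_rel M"
      using x y invertible_matrix_inv[OF g] by (auto simp: GL2_orbit_rel_def)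
  qed
  show "trans (GL2_orbit_rel M)"
    unfolding trans_def
  proof (intro allI impI)
    fix x y z assume "(x, y) \<in> GL2_orbit_rel M" "(y, z) \<in> GL2_orbit_rel M"
    then obtain g h where x: "x \<in> SF2 M" and z: "z \<in> SF2 M" and g: "invertible g" and yg: "y = GL2_act g x"
       and h: "invertible h" and zh: "z = GL2_act h y"
      by (auto simp: GL2_orbit_rel_def)
    have "z = GL2_act (h ** g) x" unfolding zh yg by (rule GL2_act_comp[OF h g])
    then show "(x, z) \<in> GL2_orbit_rel M"
      using x z invertible_mult[OF h g] by (auto simp: GL2_orbit_rel_def)
  qed
qed

lemma GL2_act_orbit:
  assumes "x \<in> SF2 M" "invertible g"
  shows "GL2_act g x \<in> SF2 M" "(x, GL2_act g x) \<in> GL2_orbit_rel M"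
  using GL2_act_SF2[OF assms] assms by (auto simp: GL2_orbit_rel_def)

lemma GL2_orbit_rel_trans: "(x, y) \<in> GL2_orbit_rel M \<Longrightarrow> (y, z) \<in> GL2_orbit_rel M \<Longrightarrow> (x, z) \<in> GL2_orbit_rel M"
  using equiv_GL2_orbit_rel[of M] by (meson equiv_def transD)

section \<open>Connectedness of quotient spaces\<close>

lemma topspace_quotient_topology:
  assumes "equiv (topspace X) R"
  shows "topspace (quotient_topology X R) = topspace X // R"
proof
  have "openin (quotient_topology X R) (topspace X // R)"
    using assms by (simp add: openin_quotient_topology Union_quotient)
  then show "topspace X // R \<subseteq> topspace (quotient_topology X R)" by (rule openin_subset)
  show "topspace (quotient_topology X R) \<subseteq> topspace X // R"
    using openin_quotient_topology[OF assms, of "topspace (quotient_topology X R)"] by simp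
qed

text \<open>The projection onto the quotient is continuous: the preimage of a set of classes is its union.\<close>
lemma continuous_map_quotient_projection:
  assumes R: "equiv (topspace X) R"
  shows "continuous_map X (quotient_topology X R) (\<lambda>x. R `` {x})"
  unfolding continuous_map
proof (intro conjI allI impI)
  show "(\<lambda>x. R `` {x}) ` topspace X \<subseteq> topspace (quotient_topology X R)"
    by (auto simp: topspace_quotient_topology[OF R] intro: quotientI)
  fix U assume "openin (quotient_topology X R) U"
  then have U: "U \<subseteq> topspace X // R" "openin X (\<Union>U)" by (simp_all add: openin_quotient_topology[OF R])
  have "{x \<in> topspace X. R `` {x} \<in> U} = \<Union>U"
  proof
    show "{x \<in> topspace X. R `` {x} \<in> U} \<subseteq> \<Union>U"
      using R by (auto simp: equiv_def refl_on_def)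
    show "\<Union>U \<subseteq> {x \<in> topspace X. R `` {x} \<in> U}"
    proof
      fix x assume "x \<in> \<Union>U"
      then obtain c where c: "c \<in> U" "x \<in> c" by blast
      then obtain y where "y \<in> topspace X" "c = R `` {y}" using U(1) by (auto elim: quotientE)
      then show "x \<in> {x \<in> topspace X. R `` {x} \<in> U}"
        using c R by (auto simp: equiv_class_eq_iff)
    qed
  qed
  then show "openin X {x \<in> topspace X. R `` {x} \<in> U}" using U(2) by simp
qed

lemma connected_space_quotient_topology:
  assumes R: "equiv (topspace X) R"
    and joined: "\<And>x y. x \<in> topspace X \<Longrightarrow> y \<in> topspace X \<Longrightarrow>
       \<exists>T. connectedin X T \<and> (\<exists>x'\<in>T. (x, x') \<in> R) \<and> (\<exists>y'\<in>T. (y, y') \<in> R)"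
  shows "connected_space (quotient_topology X R)"
  unfolding connected_space_iff_connected_component
proof (intro ballI)
  fix c d assume "c \<in> topspace (quotient_topology X R)" "d \<in> topspace (quotient_topology X R)"
  then obtain x y where x: "x \<in> topspace X" "c = R `` {x}" and y: "y \<in> topspace X" "d = R `` {y}"
    by (auto simp: topspace_quotient_topology[OF R] elim!: quotientE)
  obtain T x' y' where T: "connectedin X T" and x': "x' \<in> T" "(x, x') \<in> R"
    and y': "y' \<in> T" "(y, y') \<in> R"
    using joined[OF x(1) y(1)] by blast
  have "connectedin (quotient_topology X R) ((\<lambda>x. R `` {x}) ` T)"
    by (rule connectedin_continuous_map_image[OF continuous_map_quotient_projection[OF R] T])
  moreover have "c \<in> (\<lambda>x. R `` {x}) ` T" "d \<in> (\<lambda>x. R `` {x}) ` T"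
    using x y x' y' R by (auto simp: equiv_class_eq_iff)
  ultimately show "connected_component_of (quotient_topology X R) c d"
    unfolding connected_component_of_def by blast
qed

lemma SF2_coords:
  assumes "(A, B) \<in> SF2 M"
  shows "in_cone (coords (A i))" "in_cone (coords (B j))" "A i = sym_of (coords (A i))" "B j = sym_of (coords (B j))"
    "M $ i $ j = 2 * (coords (A i) \<bullet> coords (B j))"
proof -
  have pa: "psd2 (A i)" and pb: "psd2 (B j)" and m: "M $ i $ j = trace (A i ** B j)"
    using assms by (auto simp: SF2_def)
  show ea: "A i = sym_of (coords (A i))" using pa by (simp add: psd2_def sym_of_coords)
  show eb: "B j = sym_of (coords (B j))" using pb by (simp add: psd2_def sym_of_coords)
  show "in_cone (coords (A i))" using pa ea psd2_sym_of by metis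
  show "in_cone (coords (B j))" using pb eb psd2_sym_of by metis
  show "M $ i $ j = 2 * (coords (A i) \<bullet> coords (B j))" using m ea eb trace_sym_of by metis
qed

lemma SF2_matrix_factorization:
  assumes "(A, B) \<in> SF2 M"
  shows "M = (\<chi> i. 2 *\<^sub>R coords (A i)) ** transpose (\<chi> j. coords (B j) :: real^3^'q)"
proof -
  have "((\<chi> i. 2 *\<^sub>R coords (A i)) ** transpose (\<chi> j. coords (B j) :: real^3^'q)) $ i $ j = M $ i $ j" for i j
    using SF2_coords(5)[OF assms, of i j]
    by (simp add: matrix_matrix_mult_def inner_vec_def sum_distrib_left mult.assoc)
  then show ?thesis by (simp add: vec_eq_iff)
qed

lemma SF2_b_vectors_nondegenerate:
  fixes M :: "real^'q^'p"
  assumes AB: "(A, B) \<in> SF2 M" and r: "rank M = 3" and z: "\<forall>j. coords (B j) \<bullet> z = 0"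
  shows "z = 0"
proof -
  define Y :: "real^3^'q" where "Y = (\<chi> j. coords (B j))"
  have "rank M \<le> rank (transpose Y)"
    unfolding SF2_matrix_factorization[OF AB] Y_def by (rule rank_mul_le_right)
  moreover have "rank Y \<le> 3" using rank_bound[of Y] by simp
  ultimately have "rank Y = 3" using r by (simp add: rank_transpose)
  then have "inj ((*v) Y)" using full_rank_injective[of Y] by simp
  moreover have "Y *v z = Y *v 0"
    using z by (simp add: vec_eq_iff matrix_vector_mul_component Y_def)
  ultimately show ?thesis by (simp add: inj_on_def)
qed

lemma SF2_a_vectors_span:
  fixes M :: "real^'q^'p"
  assumes AB: "(A, B) \<in> SF2 M" and r: "rank M = 3"
  shows "\<exists>l. z = (\<Sum>i\<in>UNIV. l i *\<^sub>R coords (A i))"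
proof -
  define X :: "real^3^'p" where "X = (\<chi> i. 2 *\<^sub>R coords (A i))"
  have "rank M \<le> rank X"
    unfolding SF2_matrix_factorization[OF AB] X_def by (rule rank_mul_le_left)
  moreover have "rank X \<le> 3" using rank_bound[of X] by simp
  ultimately have "rank (transpose X) = 3" using r by (simp add: rank_transpose)
  then have "surj ((*v) (transpose X))" using full_rank_surjective[of "transpose X"] by simp
  then obtain v where v: "z = transpose X *v v" by (metis surjD)
  have "row i X = 2 *\<^sub>R coords (A i)" for i
    by (simp add: row_def X_def vec_eq_iff)
  then have "transpose X *v v = (\<Sum>i\<in>UNIV. (2 * v$i) *\<^sub>R coords (A i))"
    by (simp add: matrix_mult_sum scalar_mult_eq_scaleR mult.commute)
  then show ?thesis using v by (intro exI[of _ "\<lambda>i. 2 * v$i"]) simp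
qed

lemma transfer_matrix_exists:
  fixes M :: "real^'q^'p"
  assumes h0: "(A0, B0) \<in> SF2 M" and h1: "(A1, B1) \<in> SF2 M" and r: "rank M = 3"
  shows "\<exists>R. \<forall>i. R *v coords (A0 i) = coords (A1 i)"
proof -
  note c0 = SF2_coords[OF h0] and c1 = SF2_coords[OF h1]
  define Y0 :: "real^3^'q" where "Y0 = (\<chi> j. coords (B0 j))"
  define Y1 :: "real^3^'q" where "Y1 = (\<chi> j. coords (B1 j))"
  have "\<forall>x. Y1 *v x = 0 \<longrightarrow> x = 0"
    using SF2_b_vectors_nondegenerate[OF h1 r] by (simp add: Y1_def vec_eq_iff matrix_vector_mul_component)
  then obtain W where W: "W ** Y1 = mat 1" using matrix_left_invertible_ker by blast
  have "(W ** Y0) *v coords (A0 i) = coords (A1 i)" for i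
  proof -
    have "Y0 *v coords (A0 i) = Y1 *v coords (A1 i)"
      using c0(5)[of i] c1(5)[of i]
      by (simp add: Y0_def Y1_def vec_eq_iff matrix_vector_mul_component inner_commute)
    then have "(W ** Y0) *v coords (A0 i) = (W ** Y1) *v coords (A1 i)"
      by (simp add: matrix_vector_mul_assoc[symmetric])
    then show ?thesis using W by simp
  qed
  then show ?thesis by blast
qed

section \<open>Normalizing factorizations by the GL(2) action\<close>

definition mat2_of :: "real \<Rightarrow> real \<Rightarrow> real \<Rightarrow> real \<Rightarrow> real^2^2" where
  "mat2_of a b c d = (\<chi> i j. if i = 1 then (if j = 1 then a else b) else (if j = 1 then c else d))"

lemma mat2_of_entries[simp]:
  "mat2_of a b c d $ 1 $ 1 = a" "mat2_of a b c d $ 1 $ 2 = b" "mat2_of a b c d $ 2 $ 1 = c" "mat2_of a b c d $ 2 $ 2 = d"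
  by (simp_all add: mat2_of_def)

lemma mult2_entries:
  "(X ** Y) $ 1 $ 1 = X$1$1 * Y$1$1 + X$1$2 * Y$2$1"
  "(X ** Y) $ 1 $ 2 = X$1$1 * Y$1$2 + X$1$2 * Y$2$2"
  "(X ** Y) $ 2 $ 1 = X$2$1 * Y$1$1 + X$2$2 * Y$2$1"
  "(X ** Y) $ 2 $ 2 = X$2$1 * Y$1$2 + X$2$2 * Y$2$2"
  for X Y :: "real^2^2"
  by (simp_all add: matrix_matrix_mult_def sum_2)

lemma mat1_entries[simp]:
  "(mat 1 :: real^2^2) $ 1 $ 1 = 1" "(mat 1 :: real^2^2) $ 1 $ 2 = 0"
  "(mat 1 :: real^2^2) $ 2 $ 1 = 0" "(mat 1 :: real^2^2) $ 2 $ 2 = 1"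
  by (simp_all add: mat_def)

lemma matrix_add_rdistrib: "(B + C) ** A = B ** A + C ** (A::real^'n^'m)"
  by (simp add: vec_eq_iff matrix_matrix_mult_def sum.distrib algebra_simps)

lemma sum_congruence:
  fixes g :: "real^2^2"
  assumes "finite S"
  shows "(\<Sum>i\<in>S. g ** A i ** transpose g) = g ** (\<Sum>i\<in>S. A i) ** transpose g"
  using assms by (induction S rule: finite_induct) (simp_all add: matrix_add_ldistrib matrix_add_rdistrib)

lemma sym_of_sum: "sym_of (\<Sum>i\<in>S. v i) = (\<Sum>i\<in>S. sym_of (v i))"
  unfolding mat2_eq_iff by (simp add: sum_component sum.distrib sum_subtractf)

lemma sym_of_eq_mat2_of: "sym_of s = mat2_of (s$1 + s$2) (s$3) (s$3) (s$1 - s$2)"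
  unfolding mat2_eq_iff by simp

text \<open>Cone vectors spanning R^3 have a sum with positive time component (the cone is pointed) ...\<close>
lemma sum_spanning_time_pos:
  fixes x :: "'p::finite \<Rightarrow> real^3"
  assumes L: "\<And>i. in_cone (x i)" and sp: "\<And>z. \<exists>l. z = (\<Sum>i\<in>UNIV. l i *\<^sub>R x i)"
  shows "0 < (\<Sum>i\<in>UNIV. x i)$1"
proof (rule ccontr)
  assume "\<not> 0 < (\<Sum>i\<in>UNIV. x i)$1"
  moreover have "0 \<le> x i $ 1" for i using L by (simp add: in_cone_def)
  ultimately have "(\<Sum>i\<in>UNIV. x i $ 1) = 0" by (simp add: sum_component sum_nonneg antisym)
  then have "\<forall>i\<in>UNIV. x i $ 1 = 0" using L by (subst sum_nonneg_eq_0_iff[symmetric]) (auto simp: in_cone_def)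
  then have "\<forall>i. x i = 0" using L in_cone_zero_first by blast
  moreover obtain l where "vector [1,0,0] = (\<Sum>i\<in>UNIV. l i *\<^sub>R x i)" using sp by blast
  ultimately have "(vector [1,0,0] :: real^3) = 0" by simp
  then show False by (simp add: vec3_eq_iff)
qed

text \<open>... and lies in the interior of the cone: a vector on its boundary is orthogonal to the
  reflected vector (s1, -s2, -s3), which lies in the cone, so all x i would be orthogonal to it.\<close>
lemma sum_in_cone_interior:
  fixes x :: "'p::finite \<Rightarrow> real^3"
  assumes L: "\<And>i. in_cone (x i)" and sp: "\<And>z. \<exists>l. z = (\<Sum>i\<in>UNIV. l i *\<^sub>R x i)"
  shows "0 < (\<Sum>i\<in>UNIV. x i)$1 \<and> ((\<Sum>i\<in>UNIV. x i)$2)\<^sup>2 + ((\<Sum>i\<in>UNIV. x i)$3)\<^sup>2 < ((\<Sum>i\<in>UNIV. x i)$1)\<^sup>2"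
proof -
  define s where "s = (\<Sum>i\<in>UNIV. x i)"
  have s1: "0 < s$1" unfolding s_def using L sp by (rule sum_spanning_time_pos)
  have sL: "in_cone s" unfolding s_def using L by (intro in_cone_sum) auto
  define es where "es = (vector [s$1, -(s$2), -(s$3)] :: real^3)"
  have esL: "in_cone es" using sL by (simp add: es_def in_cone_def)
  have fs: "es \<bullet> s = (s$1)\<^sup>2 - (s$2)\<^sup>2 - (s$3)\<^sup>2" by (simp add: es_def inner3 power2_eq_square)
  have "(s$2)\<^sup>2 + (s$3)\<^sup>2 < (s$1)\<^sup>2"
  proof (rule ccontr)
    assume "\<not> ?thesis"
    then have "es \<bullet> s = 0" using sL fs by (simp add: in_cone_def)
    then have "(\<Sum>i\<in>UNIV. es \<bullet> x i) = 0" by (simp add: s_def inner_sum_right)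
    then have z: "\<forall>i\<in>UNIV. es \<bullet> x i = 0"
      using esL L in_cone_inner_nonneg by (subst sum_nonneg_eq_0_iff[symmetric]) auto
    obtain l where "es = (\<Sum>i\<in>UNIV. l i *\<^sub>R x i)" using sp by blast
    then have "es \<bullet> es = 0" using z by (simp add: inner_sum_right)
    then have "es = 0" by simp
    then show False using s1 by (simp add: es_def vec3_eq_iff)
  qed
  then show ?thesis using s1 by (simp add: s_def)
qed

text \<open>A positive definite 2x2 matrix is congruent to the identity (Cholesky decomposition).\<close>
lemma congruent_to_identity:
  assumes p: "0 < p11" "0 < p11 * p22 - p12 * p12"
  shows "\<exists>g::real^2^2. invertible g \<and> g ** mat2_of p11 p12 p12 p22 ** transpose g = mat 1"
proof -
  define d where "d = p11 * p22 - p12 * p12"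
  define \<sigma> where "\<sigma> = sqrt p11"
  define u where "u = sqrt (d / p11)"
  have d: "0 < d" using p by (simp add: d_def)
  have s2: "\<sigma> * \<sigma> = p11" and sp: "0 < \<sigma>" using p by (simp_all add: \<sigma>_def)
  have u2: "u * u = d / p11" and up: "0 < u" using p d by (simp_all add: u_def)
  define g where "g = mat2_of (1/\<sigma>) 0 (- p12 / (p11 * u)) (1/u)"
  define h where "h = mat2_of \<sigma> 0 (p12 / \<sigma>) u"
  have gh: "g ** h = mat 1"
    unfolding mat2_eq_iff using sp up s2 p
    by (simp add: g_def h_def mult2_entries field_simps)
  then have inv: "invertible g" using matrix_left_right_inverse invertible_def by blast
  have "g ** mat2_of p11 p12 p12 p22 ** transpose g = mat 1"
  proof -
    have e1: "p22 - p12 * p12 / p11 = d / p11" using p by (simp add: d_def field_simps)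
    show ?thesis unfolding mat2_eq_iff using sp up s2 u2 p e1
      by (simp add: g_def mult2_entries field_simps power2_eq_square)
  qed
  then show ?thesis using inv by blast
qed

text \<open>The normalization sum_i A_i = I, expressed in Lorentz coordinates.\<close>
definition unit_sum :: "('p \<Rightarrow> real^2^2) \<Rightarrow> bool" where
  "unit_sum A \<longleftrightarrow> (\<Sum>i\<in>UNIV. coords (A i)) = vector [1, 0, 0]"

lemma exists_unit_sum_normalization:
  fixes M :: "real^'q^'p"
  assumes AB: "(A, B) \<in> SF2 M" and r: "rank M = 3"
  shows "\<exists>g. invertible g \<and> unit_sum (\<lambda>i. g ** A i ** transpose g)"
proof -
  note c = SF2_coords[OF AB]
  define s where "s = (\<Sum>i\<in>UNIV. coords (A i))"
  have int: "0 < s$1 \<and> (s$2)\<^sup>2 + (s$3)\<^sup>2 < (s$1)\<^sup>2"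
    unfolding s_def by (rule sum_in_cone_interior[OF c(1) SF2_a_vectors_span[OF AB r]])
  have sumA: "(\<Sum>i\<in>UNIV. A i) = sym_of s"
  proof -
    have "(\<Sum>i\<in>UNIV. A i) = (\<Sum>i\<in>UNIV. sym_of (coords (A i)))" by (intro sum.cong refl c(3))
    also have "\<dots> = sym_of s" by (simp add: s_def sym_of_sum)
    finally show ?thesis .
  qed
  have "(\<bar>s$2\<bar>)\<^sup>2 < (s$1)\<^sup>2" using int zero_le_power2[of "s$3"] unfolding power2_abs by linarith
  then have "\<bar>s$2\<bar> < s$1" by (rule power_less_imp_less_base) (use int in linarith)
  then have p11: "0 < s$1 + s$2" by linarith
  have "(s$1 + s$2) * (s$1 - s$2) - s$3 * s$3 = (s$1)\<^sup>2 - (s$2)\<^sup>2 - (s$3)\<^sup>2"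
    by (simp add: power2_eq_square algebra_simps)
  then have det: "0 < (s$1 + s$2) * (s$1 - s$2) - s$3 * s$3" using int by linarith
  obtain g :: "real^2^2" where g: "invertible g"
    "g ** mat2_of (s$1 + s$2) (s$3) (s$3) (s$1 - s$2) ** transpose g = mat 1"
    using congruent_to_identity[OF p11 det] by blast
  have "(\<Sum>i\<in>UNIV. coords (g ** A i ** transpose g)) = coords (g ** (\<Sum>i\<in>UNIV. A i) ** transpose g)"
    by (simp only: coords_sum[symmetric] sum_congruence[OF finite])
  also have "\<dots> = vector [1, 0, 0]" using g(2) by (simp add: sumA sym_of_eq_mat2_of coords_mat1)
  finally show ?thesis using g(1) unfolding unit_sum_def by blast
qed

definition acts_by :: "real^2^2 \<Rightarrow> real^3^3 \<Rightarrow> bool" where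
  "acts_by g L \<longleftrightarrow> invertible g \<and> L *v vector [1, 0, 0] = vector [1, 0, 0] \<and>
     (\<forall>X. transpose X = X \<longrightarrow> coords (g ** X ** transpose g) = L *v coords X)"

lemma acts_by_invertible: "acts_by g L \<Longrightarrow> invertible g"
  by (simp add: acts_by_def)

lemma matrix_vector_sum: "finite S \<Longrightarrow> (A::real^'n^'m) *v (\<Sum>i\<in>S. f i) = (\<Sum>i\<in>S. A *v f i)"
  by (induction rule: finite_induct) (simp_all add: matrix_vector_right_distrib)

lemma realign:
  fixes A0 A1 :: "'p::finite \<Rightarrow> real^2^2"
  assumes gL: "acts_by g L" and s1: "unit_sum A1"
    and R: "\<forall>i. R *v coords (A0 i) = coords (A1 i)" and sym: "\<forall>i. transpose (A1 i) = A1 i"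
  shows "unit_sum (\<lambda>i. g ** A1 i ** transpose g)"
    and "\<forall>i. (L ** R) *v coords (A0 i) = coords (g ** A1 i ** transpose g)"
proof -
  have L: "coords (g ** A1 i ** transpose g) = L *v coords (A1 i)" for i
    using gL sym by (simp add: acts_by_def)
  have "(\<Sum>i\<in>UNIV. coords (g ** A1 i ** transpose g)) = L *v (\<Sum>i\<in>UNIV. coords (A1 i))"
    by (simp add: L matrix_vector_sum)
  also have "\<dots> = vector [1, 0, 0]" using s1 gL by (simp add: unit_sum_def acts_by_def)
  finally show "unit_sum (\<lambda>i. g ** A1 i ** transpose g)" by (simp add: unit_sum_def)
  show "\<forall>i. (L ** R) *v coords (A0 i) = coords (g ** A1 i ** transpose g)"
    by (simp add: matrix_vector_mul_assoc[symmetric] R L)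
qed

text \<open>The rotation matrix with entries c, q (c^2 + q^2 = 1) acts on Lorentz coordinates as the rotation
  of the space coordinates (z2, z3) by the double angle.\<close>
lemma rotation_acts_by:
  assumes "c * c + q * q = 1"
  shows "acts_by (mat2_of c (- q) q c)
    (vector [vector [1, 0, 0], vector [0, c * c - q * q, - (2 * q * c)], vector [0, 2 * q * c, c * c - q * q]])"
  unfolding acts_by_def
proof (intro conjI allI impI)
  show "invertible (mat2_of c (- q) q c)"
    unfolding invertible_def using assms
    by (intro exI[of _ "mat2_of c q (-q) c"]) (simp add: mat2_eq_iff mult2_entries algebra_simps)
  fix X :: "real^2^2" assume "transpose X = X"
  then have "X$2$1 = X$1$2" by (metis transpose_nth)
  then have "coords (mat2_of c (- q) q c ** X ** transpose (mat2_of c (- q) q c)) =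
     vector [(c * c + q * q) * coords X $ 1, (c * c - q * q) * coords X $ 2 - 2 * q * c * coords X $ 3,
             2 * q * c * coords X $ 2 + (c * c - q * q) * coords X $ 3]"
    unfolding vec3_eq_iff by (simp add: mult2_entries algebra_simps field_simps)
  also have "\<dots> = vector [vector [1, 0, 0], vector [0, c * c - q * q, - (2 * q * c)],
      vector [0, 2 * q * c, c * c - q * q]] *v coords X"
    using assms by (simp add: vec3_eq_iff matrix_vector_mul_component inner3)
  finally show "coords (mat2_of c (- q) q c ** X ** transpose (mat2_of c (- q) q c)) =
    vector [vector [1, 0, 0], vector [0, c * c - q * q, - (2 * q * c)], vector [0, 2 * q * c, c * c - q * q]]
      *v coords X" .
qed (simp add: vec3_eq_iff matrix_vector_mul_component inner3)

lemma rotation_annihilating: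
  fixes b d :: real
  shows "\<exists>c q. c * c + q * q = 1 \<and> 2 * q * c * b + (c * c - q * q) * d = 0 \<and>
    0 \<le> (c * c - q * q) * b - 2 * q * c * d"
proof (cases "b * b + d * d = 0")
  case True
  then have "b = 0" "d = 0" by (simp_all add: sum_squares_eq_zero_iff)
  then show ?thesis by (intro exI[of _ 1] exI[of _ 0]) simp
next
  case False
  define r where "r = sqrt (b * b + d * d)"
  have nn: "0 \<le> b * b + d * d" by (intro add_nonneg_nonneg) simp_all
  then have pos: "0 < b * b + d * d" using False by linarith
  have rp: "0 < r" using pos by (simp add: r_def)
  have r2: "r * r = b * b + d * d" by (simp add: r_def add_nonneg_nonneg)
  have "(b/r)\<^sup>2 + (-d/r)\<^sup>2 = (b * b + d * d)/(r * r)" by (simp add: power2_eq_square add_divide_distrib)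
  also have "\<dots> = 1" using r2 pos by (metis divide_self less_irrefl)
  finally have "(b/r)\<^sup>2 + (-d/r)\<^sup>2 = 1" .
  then obtain \<phi> where ph: "b/r = cos \<phi>" "-d/r = sin \<phi>" by (metis sincos_total_2pi)
  define c where "c = cos (\<phi>/2)"
  define q where "q = sin (\<phi>/2)"
  have cs: "c * c + q * q = 1" by (simp add: c_def q_def flip: power2_eq_square)
  have c2: "c * c - q * q = b/r" using ph(1) cos_double[of "\<phi>/2"] by (simp add: c_def q_def power2_eq_square)
  have s2: "2 * q * c = -d/r" using ph(2) sin_double[of "\<phi>/2"] by (simp add: c_def q_def)
  have e1: "2 * q * c * b + (c * c - q * q) * d = 0" unfolding c2 s2 by (simp add: field_simps)
  have "(c * c - q * q) * b - 2 * q * c * d = r" unfolding c2 s2 using rp r2 by (simp add: field_simps)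
  then have e2: "0 \<le> (c * c - q * q) * b - 2 * q * c * d" using rp by simp
  show ?thesis using cs e1 e2 by blast
qed

lemma exists_rotation_aligning:
  "\<exists>g L. acts_by g L \<and> (L ** R)$3$2 = 0 \<and> 0 \<le> (L ** R)$2$2"
proof -
  obtain c q where cq: "c * c + q * q = 1" "2 * q * c * R$2$2 + (c * c - q * q) * R$3$2 = 0"
      "0 \<le> (c * c - q * q) * R$2$2 - 2 * q * c * R$3$2"
    using rotation_annihilating by blast
  define L :: "real^3^3" where
    "L = vector [vector [1, 0, 0], vector [0, c * c - q * q, - (2 * q * c)], vector [0, 2 * q * c, c * c - q * q]]"
  have "(L ** R)$3$2 = 0" "0 \<le> (L ** R)$2$2"
    using cq by (simp_all add: L_def matrix_matrix_mult_def sum_3 algebra_simps)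
  then show ?thesis using rotation_acts_by[OF cq(1)] unfolding L_def by blast
qed

lemma exists_reflection_aligning:
  assumes "R$3$2 = 0"
  shows "\<exists>g L. acts_by g L \<and> (L ** R)$3$2 = 0 \<and> (L ** R)$2$2 = R$2$2 \<and> 0 \<le> (L ** R)$3$3"
proof (cases "0 \<le> R$3$3")
  case True
  have "acts_by (mat 1) (mat 1)" by (simp add: acts_by_def invertible_mat1)
  then show ?thesis using True assms by (intro exI[of _ "mat 1 :: real^2^2"] exI[of _ "mat 1 :: real^3^3"]) simp
next
  case False
  define L :: "real^3^3" where "L = vector [vector [1, 0, 0], vector [0, 1, 0], vector [0, 0, -1]]"
  have "acts_by (mat2_of 1 0 0 (-1)) L"
    unfolding acts_by_def
  proof (intro conjI allI impI)
    show "invertible (mat2_of 1 0 0 (-1))"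
      unfolding invertible_def
      by (rule exI[of _ "mat2_of 1 0 0 (-1)"]) (simp add: mat2_eq_iff mult2_entries)
  qed (simp_all add: L_def vec3_eq_iff matrix_vector_mul_component inner3 mult2_entries)
  moreover have "(L ** R)$3$2 = 0 \<and> (L ** R)$2$2 = R$2$2 \<and> 0 \<le> (L ** R)$3$3"
    using False assms by (simp add: L_def matrix_matrix_mult_def sum_3)
  ultimately show ?thesis by blast
qed

lemma fst_GL2_act: "fst (GL2_act g x) = (\<lambda>i. g ** fst x i ** transpose g)"
  by (simp add: GL2_act_def)

lemma SF2_symmetric: "x \<in> SF2 M \<Longrightarrow> transpose (fst x i) = fst x i"
  by (auto simp: SF2_def psd2_def)

lemma normal_form_pair:
  fixes M :: "real^'q^'p"
  assumes x: "x \<in> SF2 M" and y: "y \<in> SF2 M" and r: "rank M = 3"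
  obtains x' y' R where "(x, x') \<in> GL2_orbit_rel M" "(y, y') \<in> GL2_orbit_rel M"
    "unit_sum (fst x')" "unit_sum (fst y')" "\<forall>i. R *v coords (fst x' i) = coords (fst y' i)"
    "R$3$2 = 0" "0 \<le> R$2$2" "0 \<le> R$3$3"
proof -
  have normalize: "\<exists>g. invertible g \<and> unit_sum (fst (GL2_act g z))" if "z \<in> SF2 M" for z
    using exists_unit_sum_normalization[of "fst z" "snd z" M] that r by (simp add: fst_GL2_act)
  obtain g0 g1 where g0: "invertible g0" "unit_sum (fst (GL2_act g0 x))"
    and g1: "invertible g1" "unit_sum (fst (GL2_act g1 y))"
    using normalize[OF x] normalize[OF y] by blast
  define x' where "x' = GL2_act g0 x"
  define y1 where "y1 = GL2_act g1 y"
  note x' = GL2_act_orbit[OF x g0(1), folded x'_def] and y1 = GL2_act_orbit[OF y g1(1), folded y1_def]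
  obtain R where R: "\<forall>i. R *v coords (fst x' i) = coords (fst y1 i)"
    using transfer_matrix_exists[of "fst x'" "snd x'" M "fst y1" "snd y1"] x'(1) y1(1) r by auto
  obtain g2 L2 where g2: "acts_by g2 L2" "(L2 ** R)$3$2 = 0" "0 \<le> (L2 ** R)$2$2"
    using exists_rotation_aligning by blast
  define y2 where "y2 = GL2_act g2 y1"
  note y2 = GL2_act_orbit[OF y1(1) acts_by_invertible[OF g2(1)], folded y2_def]
  have R2: "unit_sum (fst y2)" "\<forall>i. (L2 ** R) *v coords (fst x' i) = coords (fst y2 i)"
    using realign[OF g2(1) _ R] g1(2) SF2_symmetric[OF y1(1)] by (simp_all add: y2_def y1_def fst_GL2_act)
  obtain g3 L3 where g3: "acts_by g3 L3" "(L3 ** (L2 ** R))$3$2 = 0"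
      "(L3 ** (L2 ** R))$2$2 = (L2 ** R)$2$2" "0 \<le> (L3 ** (L2 ** R))$3$3"
    using exists_reflection_aligning[OF g2(2)] by blast
  define y3 where "y3 = GL2_act g3 y2"
  note y3 = GL2_act_orbit[OF y2(1) acts_by_invertible[OF g3(1)], folded y3_def]
  have R3: "unit_sum (fst y3)" "\<forall>i. (L3 ** (L2 ** R)) *v coords (fst x' i) = coords (fst y3 i)"
    using realign[OF g3(1) R2(1) R2(2)] SF2_symmetric[OF y2(1)] by (simp_all add: y3_def fst_GL2_act)
  have "(y, y3) \<in> GL2_orbit_rel M"
    using GL2_orbit_rel_trans[OF GL2_orbit_rel_trans[OF y1(2) y2(2)] y3(2)] .
  then show thesis
    using that[OF x'(2) _ g0(2)[folded x'_def] R3] g2(3) g3 by simp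
qed

section \<open>A segment of Lorentzian quadratic forms\<close>

definition lform :: "real^3 \<Rightarrow> real^3 \<Rightarrow> real^3 \<Rightarrow> real^3 \<Rightarrow> real^3 \<Rightarrow> real" where
  "lform a b c u v = (a \<bullet> u) * (a \<bullet> v) - (b \<bullet> u) * (b \<bullet> v) - (c \<bullet> u) * (c \<bullet> v)"

definition lform_vec :: "real^3 \<Rightarrow> real^3 \<Rightarrow> real^3 \<Rightarrow> real^3 \<Rightarrow> real^3" where
  "lform_vec a b c u = (a \<bullet> u) *\<^sub>R a - (b \<bullet> u) *\<^sub>R b - (c \<bullet> u) *\<^sub>R c"

lemma lform_vec_inner: "lform_vec a b c u \<bullet> v = lform a b c u v"
  by (simp add: lform_vec_def lform_def inner_diff_left algebra_simps)

lemma lform_sym: "lform a b c u v = lform a b c v u"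
  by (simp add: lform_def algebra_simps)

lemma lform_lin:
  "lform a b c (x + y) v = lform a b c x v + lform a b c y v"
  "lform a b c (k *\<^sub>R x) v = k * lform a b c x v"
  "lform a b c (x - y) v = lform a b c x v - lform a b c y v"
  "lform a b c (- x) v = - lform a b c x v"
  by (simp_all add: lform_def inner_add_right inner_diff_right algebra_simps)

text \<open>A segment avoiding 0 and covered by a closed set D and its reflection -D, which meet only in 0,
  cannot pass from D to -D: the two sets would split it into disjoint relatively closed pieces.\<close>
lemma segment_stays_on_side:
  fixes D :: "'a::real_normed_vector set"
  assumes D: "closed D" and pointed: "\<And>z. z \<in> D \<Longrightarrow> -z \<in> D \<Longrightarrow> z = 0"
    and cover: "\<And>s. 0 \<le> s \<Longrightarrow> s \<le> 1 \<Longrightarrow> (1 - s) *\<^sub>R u + s *\<^sub>R v \<in> D \<or> - ((1 - s) *\<^sub>R u + s *\<^sub>R v) \<in> D"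
    and nz: "\<And>s. 0 \<le> s \<Longrightarrow> s \<le> 1 \<Longrightarrow> (1 - s) *\<^sub>R u + s *\<^sub>R v \<noteq> 0"
    and u: "u \<in> D"
  shows "v \<in> D"
proof (rule ccontr)
  assume v: "v \<notin> D"
  let ?f = "\<lambda>s::real. (1 - s) *\<^sub>R u + s *\<^sub>R v"
  let ?T = "?f ` {0..1}"
  have negD: "closed (uminus ` D)" using D by (rule closed_negations)
  have "connected ?T"
    by (intro connected_continuous_image connected_Icc continuous_intros)
  moreover have "?T \<subseteq> D \<union> uminus ` D"
    using cover by (force intro: image_eqI[where x = "- _"])
  moreover have "D \<inter> uminus ` D \<inter> ?T = {}"
    using pointed nz by fastforce
  moreover have "D \<inter> ?T \<noteq> {}"
    using u image_eqI[of u ?f 0 "{0..1}"] by auto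
  moreover have "uminus ` D \<inter> ?T \<noteq> {}"
  proof -
    have "-v \<in> D" using cover[of 1] v by simp
    then show ?thesis using image_eqI[of v ?f 1 "{0..1}"] image_eqI[of v uminus "-v"] by auto
  qed
  ultimately show False
    using D negD unfolding connected_closed by blast
qed

text \<open>Along the segment of forms Gt t = (1 - t) G0 + t G1 we construct, by Gram-Schmidt, a continuous
  Lorentz frame (aT t, bT t, cT t) of Gt t which equals the given frames at t = 0 and t = 1.\<close>
locale form_segment =
  fixes a0 b0 c0 a1 b1 c1 z0 m1 m2 :: "real^3" and D :: "(real^3) set"
  assumes n0: "a0 \<bullet> z0 = 1" "b0 \<bullet> z0 = 0" "c0 \<bullet> z0 = 0"
    and n1: "a1 \<bullet> z0 = 1" "b1 \<bullet> z0 = 0" "c1 \<bullet> z0 = 0"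
    and Dcl: "closed D" and Danti: "\<And>z. z \<in> D \<Longrightarrow> -z \<in> D \<Longrightarrow> z = 0"
    and z0D: "z0 \<in> D" and zeroD: "0 \<in> D"
    and sg0: "\<And>z. 0 \<le> lform a0 b0 c0 z z \<Longrightarrow> z \<in> D \<or> -z \<in> D"
    and sg1: "\<And>z. 0 \<le> lform a1 b1 c1 z z \<Longrightarrow> z \<in> D \<or> -z \<in> D"
    and indep: "\<And>p q r. p *\<^sub>R z0 + q *\<^sub>R m1 + r *\<^sub>R m2 = 0 \<Longrightarrow> p = 0 \<and> q = 0 \<and> r = 0"
    and spans: "\<And>z. \<exists>p q r. z = p *\<^sub>R z0 + q *\<^sub>R m1 + r *\<^sub>R m2"
    and nm: "c0 \<bullet> m1 = 0" "c1 \<bullet> m1 = 0" "0 \<le> b0 \<bullet> m1" "0 \<le> b1 \<bullet> m1"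
            "0 \<le> c0 \<bullet> m2" "0 \<le> c1 \<bullet> m2"
begin

definition Gt :: "real \<Rightarrow> real^3 \<Rightarrow> real^3 \<Rightarrow> real" where
  "Gt t u v = (1 - t) * lform a0 b0 c0 u v + t * lform a1 b1 c1 u v"

definition aT :: "real \<Rightarrow> real^3" where
  "aT t = (1 - t) *\<^sub>R a0 + t *\<^sub>R a1"

text \<open>The form Kt = (aT . u)(aT . v) - Gt is positive semidefinite of rank 2 with kernel z0; bT and cT
  are obtained from it by two Gram-Schmidt steps, along m1 and then along m2.\<close>
definition Kv :: "real \<Rightarrow> real^3 \<Rightarrow> real^3" where
  "Kv t u = (aT t \<bullet> u) *\<^sub>R aT t - ((1 - t) *\<^sub>R lform_vec a0 b0 c0 u + t *\<^sub>R lform_vec a1 b1 c1 u)"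

definition Kt :: "real \<Rightarrow> real^3 \<Rightarrow> real^3 \<Rightarrow> real" where
  "Kt t u v = (aT t \<bullet> u) * (aT t \<bullet> v) - Gt t u v"

definition bT :: "real \<Rightarrow> real^3" where
  "bT t = (1 / sqrt (Kt t m1 m1)) *\<^sub>R Kv t m1"

definition Kv' :: "real \<Rightarrow> real^3 \<Rightarrow> real^3" where
  "Kv' t u = Kv t u - (bT t \<bullet> u) *\<^sub>R bT t"

definition Kt' :: "real \<Rightarrow> real^3 \<Rightarrow> real^3 \<Rightarrow> real" where
  "Kt' t u v = Kt t u v - (bT t \<bullet> u) * (bT t \<bullet> v)"

definition cT :: "real \<Rightarrow> real^3" where
  "cT t = (1 / sqrt (Kt' t m2 m2)) *\<^sub>R Kv' t m2"

lemma Kv_inner: "Kv t u \<bullet> v = Kt t u v"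
  by (simp add: Kv_def Kt_def Gt_def inner_diff_left inner_add_left lform_vec_inner algebra_simps)

lemma Kv'_inner: "Kv' t u \<bullet> v = Kt' t u v"
  by (simp add: Kv'_def Kt'_def inner_diff_left Kv_inner)

lemma Gt_sym: "Gt t u v = Gt t v u"
  by (simp add: Gt_def lform_sym)

lemma Kt_sym: "Kt t u v = Kt t v u"
  by (simp add: Kt_def Gt_sym algebra_simps)

lemma Kt'_sym: "Kt' t u v = Kt' t v u"
  by (simp add: Kt'_def Kt_sym algebra_simps)

lemma Gt_lin:
  "Gt t (x + y) v = Gt t x v + Gt t y v"
  "Gt t (k *\<^sub>R x) v = k * Gt t x v"
  "Gt t (x - y) v = Gt t x v - Gt t y v"
  "Gt t (- x) v = - Gt t x v"
  by (simp_all add: Gt_def lform_lin algebra_simps)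

lemma Gt_lin2:
  "Gt t v (x + y) = Gt t v x + Gt t v y"
  "Gt t v (k *\<^sub>R x) = k * Gt t v x"
  "Gt t v (x - y) = Gt t v x - Gt t v y"
  "Gt t v (- x) = - Gt t v x"
  using Gt_lin Gt_sym by metis+

lemma Kt_lin:
  "Kt t (x + y) v = Kt t x v + Kt t y v"
  "Kt t (k *\<^sub>R x) v = k * Kt t x v"
  "Kt t (x - y) v = Kt t x v - Kt t y v"
  "Kt t (- x) v = - Kt t x v"
  by (simp_all add: Kt_def Gt_lin inner_add_right inner_diff_right algebra_simps)

lemma Kt_lin2:
  "Kt t v (x + y) = Kt t v x + Kt t v y"
  "Kt t v (k *\<^sub>R x) = k * Kt t v x"
  "Kt t v (x - y) = Kt t v x - Kt t v y"
  "Kt t v (- x) = - Kt t v x"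
  using Kt_lin Kt_sym by metis+

lemma Kt'_lin:
  "Kt' t (x + y) v = Kt' t x v + Kt' t y v"
  "Kt' t (k *\<^sub>R x) v = k * Kt' t x v"
  by (simp_all add: Kt'_def Kt_lin inner_add_right algebra_simps)

lemma future_cone_interpolates:
  assumes t: "0 \<le> t" "t \<le> 1"
    and v0: "0 \<le> a0 \<bullet> v" "0 \<le> lform a0 b0 c0 v v" and v1: "0 \<le> a1 \<bullet> v" "0 \<le> lform a1 b1 c1 v v"
  shows "0 \<le> aT t \<bullet> v \<and> 0 \<le> Gt t v v"
  using assms by (simp add: aT_def Gt_def inner_add_left)

lemma aT_z0: "aT t \<bullet> z0 = 1"
  by (simp add: aT_def inner_add_left n0 n1)

lemma lform0_z0: "lform a0 b0 c0 z0 v = a0 \<bullet> v"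
  by (simp add: lform_def n0 inner_commute)
lemma lform1_z0: "lform a1 b1 c1 z0 v = a1 \<bullet> v"
  by (simp add: lform_def n1 inner_commute)

lemma Gt_z0: "Gt t z0 v = aT t \<bullet> v"
  by (simp add: Gt_def lform0_z0 lform1_z0 aT_def inner_add_left)

lemma Gt_z0z0: "Gt t z0 z0 = 1"
  by (simp add: Gt_z0 aT_z0)

lemma Kt_z0: "Kt t z0 v = 0"
  by (simp add: Kt_def aT_z0 Gt_z0)

lemma z0_nz: "z0 \<noteq> 0"
  using indep[of 1 0 0] by auto

text \<open>Vectors of nonnegative Gt t-length lie in D or -D, since one of G0, G1 is nonnegative on them.\<close>
lemma Gt_nonneg_cases:
  assumes t: "0 \<le> t" "t \<le> 1" and g: "0 \<le> Gt t z z"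
  shows "z \<in> D \<or> -z \<in> D"
proof (cases "0 \<le> lform a0 b0 c0 z z")
  case True then show ?thesis using sg0 by blast
next
  case False
  have "0 \<le> lform a1 b1 c1 z z"
  proof (rule ccontr)
    assume "\<not> 0 \<le> lform a1 b1 c1 z z"
    then have n1: "lform a1 b1 c1 z z < 0" by simp
    have n0: "lform a0 b0 c0 z z < 0" using False by simp
    have "(1 - t) * lform a0 b0 c0 z z + t * lform a1 b1 c1 z z < 0"
    proof (cases "t = 0")
      case True then show ?thesis using n0 by simp
    next
      case False
      then have "t * lform a1 b1 c1 z z < 0" using n1 t by (simp add: mult_pos_neg)
      moreover have "(1 - t) * lform a0 b0 c0 z z \<le> 0" using n0 t by (simp add: mult_nonneg_nonpos)
      ultimately show ?thesis by linarith
    qed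
    then show False using g by (simp add: Gt_def)
  qed
  then show ?thesis using sg1 by blast
qed

lemma segment_stays_in_D:
  assumes t: "0 \<le> t" "t \<le> 1"
    and g: "0 \<le> Gt t u u" "0 \<le> Gt t v v" "0 \<le> Gt t u v"
    and nz: "\<And>s. 0 \<le> s \<Longrightarrow> s \<le> 1 \<Longrightarrow> (1 - s) *\<^sub>R u + s *\<^sub>R v \<noteq> 0"
    and uD: "u \<in> D"
  shows "v \<in> D"
proof (rule segment_stays_on_side[OF Dcl Danti _ nz uD])
  fix s :: real assume s: "0 \<le> s" "s \<le> 1"
  let ?w = "(1 - s) *\<^sub>R u + s *\<^sub>R v"
  have "Gt t ?w ?w = (1-s)*((1-s) * Gt t u u + s * Gt t v u) + s * ((1-s) * Gt t u v + s * Gt t v v)"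
    by (simp only: Gt_lin Gt_lin2)
  also have "\<dots> = (1-s)^2 * Gt t u u + 2 * (s * (1 - s)) * Gt t u v + s^2 * Gt t v v"
    using Gt_sym[of t v u] by (simp add: power2_eq_square algebra_simps)
  also have "\<dots> \<ge> 0" using g s by (intro add_nonneg_nonneg mult_nonneg_nonneg) auto
  finally show "?w \<in> D \<or> - ?w \<in> D" by (rule Gt_nonneg_cases[OF t])
qed

text \<open>The future cone of Gt t lies in D: it is joined to z0 by segments of vectors of nonnegative length.\<close>
lemma future_cone_in_D:
  assumes t: "0 \<le> t" "t \<le> 1" and a: "0 \<le> aT t \<bullet> z" and g: "0 \<le> Gt t z z"
  shows "z \<in> D"
proof (cases "z = 0")
  case True then show ?thesis using zeroD by simp
next
  case False
  show ?thesis
  proof (rule segment_stays_in_D[OF t _ g _ _ z0D])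
    show "0 \<le> Gt t z0 z0" by (simp add: Gt_z0z0)
    show "0 \<le> Gt t z0 z" using a by (simp add: Gt_z0)
    fix s :: real assume s: "0 \<le> s" "s \<le> 1"
    show "(1 - s) *\<^sub>R z0 + s *\<^sub>R z \<noteq> 0"
    proof
      assume e: "(1 - s) *\<^sub>R z0 + s *\<^sub>R z = 0"
      show False
      proof (cases "s = 0")
        case True then show False using e z0_nz by simp
      next
        case sn: False
        have zz: "z = ((s - 1) / s) *\<^sub>R z0"
        proof -
          have "s *\<^sub>R z = (s - 1) *\<^sub>R z0" using e by (simp add: algebra_simps eq_neg_iff_add_eq_0)
          then have "(1/s) *\<^sub>R (s *\<^sub>R z) = (1/s) *\<^sub>R ((s - 1) *\<^sub>R z0)" by simp
          then show ?thesis using sn by simp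
        qed
        have azz: "aT t \<bullet> z = (s - 1) / s" unfolding zz by (simp add: aT_z0)
        have sp: "0 < s" using s sn by simp
        have "0 \<le> (s - 1) / s" using a azz by simp
        then have "0 \<le> s - 1" using sp by (simp add: zero_le_divide_iff)
        then have "s = 1" using s by simp
        then show False using zz False by simp
      qed
    qed
  qed
qed

lemma z0_combination_zero:
  assumes v: "\<And>k. v \<noteq> k *\<^sub>R z0" and e: "p *\<^sub>R z0 + q *\<^sub>R v = 0"
  shows "p = 0 \<and> q = 0"
proof (cases "q = 0")
  case True
  then have "p *\<^sub>R z0 = 0" using e by simp
  then show ?thesis using True z0_nz by simp
next
  case False
  have "q *\<^sub>R v = (- p) *\<^sub>R z0" using e by (simp add: eq_neg_iff_add_eq_0 add.commute)
  then have "(1/q) *\<^sub>R (q *\<^sub>R v) = (1/q) *\<^sub>R ((- p) *\<^sub>R z0)" by simp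
  then have "v = ((- p) / q) *\<^sub>R z0" using False by simp
  then show ?thesis using v by blast
qed

text \<open>Kt t is positive on every vector outside the line through z0; otherwise the Gt t-orthogonal
  projection of that vector would join z0 to -z0 inside D.\<close>
lemma Kt_pos:
  assumes t: "0 \<le> t" "t \<le> 1" and w: "\<And>k. w \<noteq> k *\<^sub>R z0"
  shows "0 < Kt t w w"
proof (rule ccontr)
  assume "\<not> 0 < Kt t w w"
  then have kw: "Kt t w w \<le> 0" by simp
  define w' where "w' = w - (aT t \<bullet> w) *\<^sub>R z0"
  have aw': "aT t \<bullet> w' = 0" by (simp add: w'_def inner_diff_right aT_z0)
  have Kz: "Kt t v z0 = 0" for v using Kt_z0 Kt_sym by metis
  have "Kt t w' w' = Kt t w w"
    by (simp add: w'_def Kt_lin Kt_lin2 Kt_z0 Kz)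
  then have Gw': "0 \<le> Gt t w' w'" using kw aw' by (simp add: Kt_def)
  have w'n: "w' \<noteq> k *\<^sub>R z0" for k
  proof
    assume "w' = k *\<^sub>R z0"
    then have "w = (k + aT t \<bullet> w) *\<^sub>R z0" by (simp add: w'_def algebra_simps)
    then show False using w by blast
  qed
  have "w' \<in> D"
  proof (rule segment_stays_in_D[OF t _ Gw' _ _ z0D])
    show "0 \<le> Gt t z0 z0" by (simp add: Gt_z0z0)
    show "0 \<le> Gt t z0 w'" by (simp add: Gt_z0 aw')
    fix s :: real assume s: "0 \<le> s" "s \<le> 1"
    show "(1 - s) *\<^sub>R z0 + s *\<^sub>R w' \<noteq> 0"
      using z0_combination_zero[OF w'n, of "1 - s" s] by auto
  qed
  have "- z0 \<in> D"
  proof (rule segment_stays_in_D[OF t Gw' _ _ _ \<open>w' \<in> D\<close>])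
    show "0 \<le> Gt t (- z0) (- z0)" by (simp add: Gt_lin Gt_lin2 Gt_z0z0)
    show "0 \<le> Gt t w' (- z0)" using Gt_z0[of t w'] aw' by (simp add: Gt_lin2 Gt_sym[of t w' z0])
    fix s :: real assume s: "0 \<le> s" "s \<le> 1"
    show "(1 - s) *\<^sub>R w' + s *\<^sub>R (- z0) \<noteq> 0"
      using z0_combination_zero[OF w'n, of "- s" "1 - s"] by (auto simp: add.commute)
  qed
  then show False using Danti z0D z0_nz by blast
qed

lemma m1_not_multiple: "m1 \<noteq> k *\<^sub>R z0"
proof
  assume "m1 = k *\<^sub>R z0"
  then have "(- k) *\<^sub>R z0 + 1 *\<^sub>R m1 + 0 *\<^sub>R m2 = 0" by simp
  then show False using indep[of "- k" 1 0] by simp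
qed

lemma K11_pos: "0 \<le> t \<Longrightarrow> t \<le> 1 \<Longrightarrow> 0 < Kt t m1 m1"
  using Kt_pos m1_not_multiple by blast

lemma bT_inner: "0 \<le> t \<Longrightarrow> t \<le> 1 \<Longrightarrow> bT t \<bullet> u = Kt t m1 u / sqrt (Kt t m1 m1)"
  by (simp add: bT_def Kv_inner)

lemma Kt'_expand: "0 \<le> t \<Longrightarrow> t \<le> 1 \<Longrightarrow> Kt' t u v = Kt t u v - Kt t m1 u * Kt t m1 v / Kt t m1 m1"
  using K11_pos[of t] by (simp add: Kt'_def bT_inner power2_eq_square[symmetric] real_sqrt_pow2 )

lemma K22_pos:
  assumes t: "0 \<le> t" "t \<le> 1" shows "0 < Kt' t m2 m2"
proof -
  let ?k11 = "Kt t m1 m1" and ?k12 = "Kt t m1 m2" and ?k22 = "Kt t m2 m2"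
  have k11: "0 < ?k11" using K11_pos[OF t] .
  define w where "w = ?k12 *\<^sub>R m1 - ?k11 *\<^sub>R m2"
  have wn: "w \<noteq> k *\<^sub>R z0" for k
  proof
    assume "w = k *\<^sub>R z0"
    then have "(- k) *\<^sub>R z0 + ?k12 *\<^sub>R m1 + (- ?k11) *\<^sub>R m2 = 0" by (simp add: w_def algebra_simps)
    then show False using indep k11 by fastforce
  qed
  have "Kt t w w = ?k11 * (?k11 * ?k22 - ?k12 * ?k12)"
    using Kt_sym[of t m2 m1] by (simp add: w_def Kt_lin Kt_lin2 algebra_simps)
  moreover have "0 < Kt t w w" using Kt_pos[OF t wn] .
  ultimately have "0 < ?k11 * ?k22 - ?k12 * ?k12" using k11 by (simp add: zero_less_mult_iff)
  then have "0 < ?k22 - ?k12 * ?k12 / ?k11" using k11 by (simp add: field_simps)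
  then show ?thesis using Kt'_expand[OF t] by simp
qed

text \<open>Kt' t vanishes on z0 and m1, hence has rank one and equals (cT t . u)(cT t . v).\<close>
lemma cT_inner: "cT t \<bullet> u = Kt' t m2 u / sqrt (Kt' t m2 m2)"
  by (simp add: cT_def Kv'_inner)

lemma Kt'_z0: "0 \<le> t \<Longrightarrow> t \<le> 1 \<Longrightarrow> Kt' t z0 v = 0"
  using Kt_z0[of t] Kt_sym[of t m1 z0] by (simp add: Kt'_expand)

lemma Kt'_m1: "0 \<le> t \<Longrightarrow> t \<le> 1 \<Longrightarrow> Kt' t m1 v = 0"
  using K11_pos[of t] by (simp add: Kt'_expand)

lemma Kt'_rank_one:
  assumes t: "0 \<le> t" "t \<le> 1"
  shows "Kt' t u v = (cT t \<bullet> u) * (cT t \<bullet> v)"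
proof -
  obtain p q r where u: "u = p *\<^sub>R z0 + q *\<^sub>R m1 + r *\<^sub>R m2" using spans by blast
  have k: "0 < Kt' t m2 m2" using K22_pos[OF t] .
  have 1: "Kt' t u v = r * Kt' t m2 v"
    by (simp add: u Kt'_lin Kt'_z0[OF t] Kt'_m1[OF t])
  have 2: "Kt' t m2 u = r * Kt' t m2 m2"
  proof -
    have "Kt' t u m2 = r * Kt' t m2 m2"
      by (simp add: u Kt'_lin Kt'_z0[OF t] Kt'_m1[OF t])
    then show ?thesis using Kt'_sym[of t u m2] by simp
  qed
  have "(cT t \<bullet> u) * (cT t \<bullet> v) = Kt' t m2 u * Kt' t m2 v / (sqrt (Kt' t m2 m2))^2"
    by (simp add: cT_inner power2_eq_square)
  also have "\<dots> = r * Kt' t m2 v" using k by (simp add: 2)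
  finally show ?thesis using 1 by simp
qed

lemma Gt_frame_decomposition:
  assumes t: "0 \<le> t" "t \<le> 1"
  shows "Gt t u v = lform (aT t) (bT t) (cT t) u v"
  using Kt'_rank_one[OF t, of u v] by (simp add: Kt'_def Kt_def lform_def)

text \<open>The frame is a basis of R^3: a common orthogonal vector would have Gt-length 0 and lie in D and -D.\<close>
lemma frame_independent:
  assumes t: "0 \<le> t" "t \<le> 1" and z: "aT t \<bullet> z = 0" "bT t \<bullet> z = 0" "cT t \<bullet> z = 0"
  shows "z = 0"
proof -
  have g: "Gt t z z = 0" using Gt_frame_decomposition[OF t, of z z] z by (simp add: lform_def)
  have "z \<in> D" using future_cone_in_D[OF t] g z by simp
  moreover have "- z \<in> D" using future_cone_in_D[OF t, of "- z"] g z by (simp add: Gt_lin Gt_lin2 inner_minus_right)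
  ultimately show ?thesis using Danti by blast
qed

text \<open>The frame depends continuously on t, because all square roots taken are of positive quantities.\<close>
lemma frame_continuous:
  "continuous_on {0..1} aT" "continuous_on {0..1} bT" "continuous_on {0..1} cT"
proof -
  show ca: "continuous_on {0..1} aT" unfolding aT_def by (intro continuous_intros)
  have cKv: "continuous_on {0..1} (\<lambda>t. Kv t u)" for u
    unfolding Kv_def aT_def by (intro continuous_intros)
  have cKt: "continuous_on {0..1} (\<lambda>t. Kt t u v)" for u v
    unfolding Kt_def Gt_def aT_def by (intro continuous_intros)
  have nz1: "Kt t m1 m1 \<noteq> 0" "sqrt (Kt t m1 m1) \<noteq> 0" if "t \<in> {0..1}" for t
    using K11_pos[of t] that by auto
  have nz2: "Kt' t m2 m2 \<noteq> 0" "sqrt (Kt' t m2 m2) \<noteq> 0" if "t \<in> {0..1}" for t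
    using K22_pos[of t] that by auto
  show cb: "continuous_on {0..1} bT"
    unfolding bT_def
    by (intro continuous_intros cKv cKt) (use nz1 in auto)
  have cbi: "continuous_on {0..1} (\<lambda>t. bT t \<bullet> u)" for u
    by (intro continuous_intros cb)
  have cKv': "continuous_on {0..1} (\<lambda>t. Kv' t u)" for u
    unfolding Kv'_def by (intro continuous_intros cKv cb cbi)
  have cKt': "continuous_on {0..1} (\<lambda>t. Kt' t u v)" for u v
    unfolding Kt'_def by (intro continuous_intros cKt cbi)
  show "continuous_on {0..1} cT"
    unfolding cT_def
    by (intro continuous_intros cKv' cKt') (use nz2 in auto)
qed

text \<open>At t = 0 and t = 1 the Gram-Schmidt frame is the given frame, thanks to the sign conventions on m1, m2.\<close>
lemma frame_endpoint:
  assumes t: "0 \<le> t" "t \<le> 1"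
    and kv: "\<And>u. Kv t u = (b \<bullet> u) *\<^sub>R b + (c \<bullet> u) *\<^sub>R c"
    and cm1: "c \<bullet> m1 = 0" and bm1: "0 \<le> b \<bullet> m1" and cm2: "0 \<le> c \<bullet> m2"
  shows "bT t = b \<and> cT t = c"
proof -
  have kt: "Kt t u v = (b \<bullet> u) * (b \<bullet> v) + (c \<bullet> u) * (c \<bullet> v)" for u v
    using kv[of u] Kv_inner[of t u v] by (simp add: inner_add_left)
  have k11: "Kt t m1 m1 = (b \<bullet> m1)^2" using kt[of m1 m1] cm1 by (simp add: power2_eq_square)
  have pos: "0 < b \<bullet> m1" using K11_pos[OF t] k11 bm1 by (cases "b \<bullet> m1 = 0") auto
  have sq: "sqrt (Kt t m1 m1) = b \<bullet> m1" using k11 bm1 by simp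
  have bT: "bT t = b" unfolding bT_def sq kv using cm1 pos by simp
  have kv': "Kv' t u = (c \<bullet> u) *\<^sub>R c" for u unfolding Kv'_def bT kv by simp
  have k22: "Kt' t m2 m2 = (c \<bullet> m2)^2" using kv'[of m2] Kv'_inner[of t m2 m2] by (simp add: power2_eq_square)
  have pos2: "0 < c \<bullet> m2" using K22_pos[OF t] k22 cm2 by (cases "c \<bullet> m2 = 0") auto
  have sq2: "sqrt (Kt' t m2 m2) = c \<bullet> m2" using k22 cm2 by simp
  have "cT t = c" unfolding cT_def sq2 kv' using pos2 by simp
  then show ?thesis using bT by simp
qed

lemma frame_endpoints:
  "aT 0 = a0" "bT 0 = b0" "cT 0 = c0" "aT 1 = a1" "bT 1 = b1" "cT 1 = c1"
proof -
  show "aT 0 = a0" "aT 1 = a1" by (simp_all add: aT_def)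
  have "bT 0 = b0 \<and> cT 0 = c0"
    by (rule frame_endpoint) (auto simp: Kv_def aT_def lform_vec_def nm)
  then show "bT 0 = b0" "cT 0 = c0" by auto
  have "bT 1 = b1 \<and> cT 1 = c1"
    by (rule frame_endpoint) (auto simp: Kv_def aT_def lform_vec_def nm)
  then show "bT 1 = b1" "cT 1 = c1" by auto
qed

end

declare cross_components [simp]

lemma inner_vector3: "(vector [p1, p2, p3] :: real^3) \<bullet> vector [q1, q2, q3] = p1 * q1 + p2 * q2 + p3 * q3"
  by (simp add: inner3)

lemma inner_vr: "(u::real^3) \<bullet> vector [p, q, r] = u$1 * p + u$2 * q + u$3 * r"
  by (simp add: inner3)

lemma cross_id:
  "(a \<bullet> x) *\<^sub>R cross3 b c + (b \<bullet> x) *\<^sub>R cross3 c a + (c \<bullet> x) *\<^sub>R cross3 a b = (a \<bullet> cross3 b c) *\<^sub>R x"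
  unfolding vec3_eq_iff by (simp add: inner3 algebra_simps)

lemma cross_cyc: "b \<bullet> cross3 c a = a \<bullet> cross3 b c" "c \<bullet> cross3 a b = a \<bullet> cross3 b c"
  by (simp_all add: inner3 algebra_simps)

text \<open>For a frame (a, b, c) of R^3, frame_apply sends x to its coordinates (a.x, b.x, c.x), and
  dual_frame_apply is the inverse transpose of that map, computed by Cramer's rule.\<close>
definition frame_apply :: "real^3 \<Rightarrow> real^3 \<Rightarrow> real^3 \<Rightarrow> real^3 \<Rightarrow> real^3" where
  "frame_apply a b c x = vector [a \<bullet> x, b \<bullet> x, c \<bullet> x]"

definition dual_frame_apply :: "real^3 \<Rightarrow> real^3 \<Rightarrow> real^3 \<Rightarrow> real^3 \<Rightarrow> real^3" where
  "dual_frame_apply a b c y = (1 / (a \<bullet> cross3 b c)) *\<^sub>R vector [cross3 b c \<bullet> y, cross3 c a \<bullet> y, cross3 a b \<bullet> y]"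

lemma frame_dual_pairing:
  assumes "a \<bullet> cross3 b c \<noteq> 0"
  shows "frame_apply a b c x \<bullet> dual_frame_apply a b c y = x \<bullet> y"
proof -
  have "frame_apply a b c x \<bullet> dual_frame_apply a b c y =
      (1 / (a \<bullet> cross3 b c)) * (((a \<bullet> x) *\<^sub>R cross3 b c + (b \<bullet> x) *\<^sub>R cross3 c a + (c \<bullet> x) *\<^sub>R cross3 a b) \<bullet> y)"
    by (simp add: frame_apply_def dual_frame_apply_def inner_vector3 inner_add_left algebra_simps)
  also have "\<dots> = x \<bullet> y" unfolding cross_id using assms by simp
  finally show ?thesis .
qed

definition frame_preimage :: "real^3 \<Rightarrow> real^3 \<Rightarrow> real^3 \<Rightarrow> real^3 \<Rightarrow> real^3" where
  "frame_preimage a b c u = (1 / (a \<bullet> cross3 b c)) *\<^sub>R ((u$1) *\<^sub>R cross3 b c + (u$2) *\<^sub>R cross3 c a + (u$3) *\<^sub>R cross3 a b)"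

lemma frame_preimage_props:
  fixes u y :: "real^3"
  assumes d: "a \<bullet> cross3 b c \<noteq> 0"
  shows "a \<bullet> frame_preimage a b c u = u$1" "b \<bullet> frame_preimage a b c u = u$2" "c \<bullet> frame_preimage a b c u = u$3"
    "u \<bullet> dual_frame_apply a b c y = frame_preimage a b c u \<bullet> y"
proof -
  show "a \<bullet> frame_preimage a b c u = u$1" using d by (simp add: frame_preimage_def inner_add_right dot_cross_self cross_cyc)
  show "b \<bullet> frame_preimage a b c u = u$2" using d by (simp add: frame_preimage_def inner_add_right dot_cross_self cross_cyc)
  show "c \<bullet> frame_preimage a b c u = u$3" using d by (simp add: frame_preimage_def inner_add_right dot_cross_self cross_cyc)
  show "u \<bullet> dual_frame_apply a b c y = frame_preimage a b c u \<bullet> y"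
    by (simp add: frame_preimage_def dual_frame_apply_def inner_add_left inner_vr algebra_simps)
qed

lemma frame_apply_std: "frame_apply (vector [1,0,0]) (vector [0,1,0]) (vector [0,0,1]) x = x"
  by (simp add: frame_apply_def vec3_eq_iff inner3)

lemma dual_frame_apply_std: "dual_frame_apply (vector [1,0,0]) (vector [0,1,0]) (vector [0,0,1]) y = y"
  by (simp add: dual_frame_apply_def vec3_eq_iff inner3)

lemma frame_apply_rows: "frame_apply (R$1) (R$2) (R$3) x = R *v x"
  by (simp add: frame_apply_def vec3_eq_iff matrix_vector_mul_component)

lemma continuous_on_vector3:
  assumes "continuous_on S f" "continuous_on S g" "continuous_on S h"
  shows "continuous_on S (\<lambda>t. vector [f t, g t, h t] :: real^3)"
proof -
  have e: "(\<lambda>t. vector [f t, g t, h t] :: real^3) = (\<lambda>t. \<chi> i. if i = 1 then f t else if i = 2 then g t else h t)"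
    by (rule ext) (simp add: vec3_eq_iff)
  have "continuous_on S (\<lambda>t. if i = 1 then f t else if i = 2 then g t else h t)" for i :: 3
    using assms by (cases "i = 1"; cases "i = 2") auto
  then show ?thesis unfolding e by (intro continuous_on_vec_lambda)
qed

lemma continuous_on_sym_of:
  assumes f: "continuous_on S f"
  shows "continuous_on S (\<lambda>t. sym_of (f t))"
proof -
  have c: "continuous_on S (\<lambda>t. f t $ k)" for k using f by (intro continuous_intros)
  have "continuous_on S (\<lambda>t. if i = 1 \<and> j = 1 then f t $ 1 + f t $ 2 else if i = 2 \<and> j = 2 then f t $ 1 - f t $ 2 else f t $ 3)" for i j :: 2
    using c f by (cases "i = 1 \<and> j = 1"; cases "i = 2 \<and> j = 2") (auto intro!: continuous_intros)
  then show ?thesis unfolding sym_of_def by (intro continuous_on_vec_lambda)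
qed

lemma frame_det_nonzero:
  assumes "\<And>z. a \<bullet> z = 0 \<Longrightarrow> b \<bullet> z = 0 \<Longrightarrow> c \<bullet> z = 0 \<Longrightarrow> z = 0"
  shows "a \<bullet> cross3 b c \<noteq> 0"
proof -
  let ?T = "vector [a, b, c] :: real^3^3"
  have "\<forall>x. ?T *v x = 0 \<longrightarrow> x = 0"
    using assms by (simp add: vec3_eq_iff matrix_vector_mul_component)
  then have "\<exists>B. B ** ?T = mat 1" by (simp add: matrix_left_invertible_ker)
  then have "invertible ?T" using invertible_left_inverse by blast
  then have "det ?T \<noteq> 0" by (simp add: invertible_det_nz)
  then show ?thesis by (simp add: dot_cross_det)
qed

definition frame_transform :: "real^3 \<Rightarrow> real^3 \<Rightarrow> real^3 \<Rightarrow> ('p \<Rightarrow> real^2^2) \<times> ('q \<Rightarrow> real^2^2)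
    \<Rightarrow> ('p \<Rightarrow> real^2^2) \<times> ('q \<Rightarrow> real^2^2)" where
  "frame_transform a b c x =
     ((\<lambda>i. sym_of (frame_apply a b c (coords (fst x i)))),
      (\<lambda>j. sym_of (dual_frame_apply a b c (coords (snd x j)))))"

lemma lform_diag: "lform a b c z z = (a \<bullet> z)\<^sup>2 - (b \<bullet> z)\<^sup>2 - (c \<bullet> z)\<^sup>2"
  by (simp add: lform_def power2_eq_square)

text \<open>The transform of a factorization is again one, provided the frame maps the a-vectors into
  the cone and the future cone of its Lorentz form lies in the dual cone of the b-vectors;
  the latter makes the dual frame map the b-vectors into the (self-dual) cone.\<close>
lemma frame_transform_SF2:
  assumes x: "x \<in> SF2 M" and d: "a \<bullet> cross3 b c \<noteq> 0"
    and A: "\<And>i. 0 \<le> a \<bullet> coords (fst x i) \<and> 0 \<le> lform a b c (coords (fst x i)) (coords (fst x i))"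
    and B: "\<And>z j. 0 \<le> a \<bullet> z \<Longrightarrow> 0 \<le> lform a b c z z \<Longrightarrow> 0 \<le> z \<bullet> coords (snd x j)"
  shows "frame_transform a b c x \<in> SF2 M"
proof -
  have x': "(fst x, snd x) \<in> SF2 M" using x by simp
  have A_psd: "psd2 (sym_of (frame_apply a b c (coords (fst x i))))" for i
    using A[of i] by (simp add: psd2_sym_of in_cone_def frame_apply_def lform_diag)
  have B_psd: "psd2 (sym_of (dual_frame_apply a b c (coords (snd x j))))" for j
  proof -
    have "in_cone (dual_frame_apply a b c (coords (snd x j)))"
    proof (rule in_cone_dual)
      fix u assume u: "in_cone u"
      define z where "z = frame_preimage a b c u"
      note pre = frame_preimage_props[OF d, of u, folded z_def]
      have "0 \<le> a \<bullet> z" "0 \<le> lform a b c z z" using pre(1-3) u by (simp_all add: in_cone_def lform_diag)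
      then have "0 \<le> z \<bullet> coords (snd x j)" by (rule B)
      then show "0 \<le> u \<bullet> dual_frame_apply a b c (coords (snd x j))" using pre(4) by simp
    qed
    then show ?thesis by (simp add: psd2_sym_of)
  qed
  have "M$i$j = trace (sym_of (frame_apply a b c (coords (fst x i))) **
                       sym_of (dual_frame_apply a b c (coords (snd x j))))" for i j
    using SF2_coords(5)[OF x', of i j] frame_dual_pairing[OF d] by (simp add: trace_sym_of)
  then show ?thesis using A_psd B_psd by (simp add: SF2_def frame_transform_def)
qed

lemma frame_transform_continuous:
  fixes a b c :: "'a::t2_space \<Rightarrow> real^3"
  assumes ca: "continuous_on S a" and cb: "continuous_on S b" and cc: "continuous_on S c"
    and d: "\<And>t. t \<in> S \<Longrightarrow> a t \<bullet> cross3 (b t) (c t) \<noteq> 0"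
  shows "continuous_on S (\<lambda>t. frame_transform (a t) (b t) (c t) x)"
proof -
  have cd: "continuous_on S (\<lambda>t. a t \<bullet> cross3 (b t) (c t))"
    by (intro continuous_intros continuous_on_cross ca cb cc)
  have cf: "continuous_on S (\<lambda>t. frame_apply (a t) (b t) (c t) v)" for v
    unfolding frame_apply_def by (intro continuous_on_vector3 continuous_intros ca cb cc)
  have cdf: "continuous_on S (\<lambda>t. dual_frame_apply (a t) (b t) (c t) w)" for w
    unfolding dual_frame_apply_def using d
    by (intro continuous_on_vector3 continuous_intros continuous_on_cross ca cb cc cd) auto
  show ?thesis unfolding frame_transform_def
    by (intro continuous_intros continuous_on_sym_of cf cdf)
qed

lemma frame_transform_std:
  assumes "x \<in> SF2 M"
  shows "frame_transform (vector [1, 0, 0]) (vector [0, 1, 0]) (vector [0, 0, 1]) x = x"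
proof -
  have "(fst x, snd x) \<in> SF2 M" using assms by simp
  note c = SF2_coords(3,4)[OF this]
  show ?thesis
    using c[symmetric] by (simp add: frame_transform_def frame_apply_std dual_frame_apply_std prod_eq_iff fun_eq_iff)
qed

text \<open>A transfer map R of the a-vectors also transfers the pairings with the b-vectors, because
  the a-vectors span R^3.\<close>
lemma transfer_pairing:
  fixes M :: "real^'q^'p"
  assumes x: "x \<in> SF2 M" and y: "y \<in> SF2 M" and r: "rank M = 3"
    and R: "\<forall>i. R *v coords (fst x i) = coords (fst y i)"
  shows "(R *v z) \<bullet> coords (snd y j) = z \<bullet> coords (snd x j)"
proof -
  have x': "(fst x, snd x) \<in> SF2 M" and y': "(fst y, snd y) \<in> SF2 M" using x y by simp_all
  obtain l where z: "z = (\<Sum>i\<in>UNIV. l i *\<^sub>R coords (fst x i))" using SF2_a_vectors_span[OF x' r] by blast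
  have "R *v z = (\<Sum>i\<in>UNIV. l i *\<^sub>R coords (fst y i))"
    unfolding z using R by (simp add: matrix_vector_sum matrix_vector_mult_scaleR)
  then have "(R *v z) \<bullet> coords (snd y j) = (\<Sum>i\<in>UNIV. l i * (coords (fst y i) \<bullet> coords (snd y j)))"
    by (simp add: inner_sum_left)
  also have "\<dots> = (\<Sum>i\<in>UNIV. l i * (coords (fst x i) \<bullet> coords (snd x j)))"
    using SF2_coords(5)[OF x'] SF2_coords(5)[OF y'] by simp
  also have "\<dots> = z \<bullet> coords (snd x j)" unfolding z by (simp add: inner_sum_left)
  finally show ?thesis .
qed

text \<open>If R transfers the a-vectors of x to those of y, then the frame of rows of R transforms x into
  y: the b-vectors are determined by their pairings with the spanning a-vectors.\<close>
lemma frame_transform_rows: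
  fixes M :: "real^'q^'p"
  assumes x: "x \<in> SF2 M" and y: "y \<in> SF2 M" and r: "rank M = 3"
    and R: "\<forall>i. R *v coords (fst x i) = coords (fst y i)" and d: "R$1 \<bullet> cross3 (R$2) (R$3) \<noteq> 0"
  shows "frame_transform (R$1) (R$2) (R$3) x = y"
proof -
  have y': "(fst y, snd y) \<in> SF2 M" using y by simp
  have b: "dual_frame_apply (R$1) (R$2) (R$3) (coords (snd x j)) = coords (snd y j)" for j
  proof -
    let ?w = "dual_frame_apply (R$1) (R$2) (R$3) (coords (snd x j)) - coords (snd y j)"
    have o: "coords (fst y i) \<bullet> ?w = 0" for i
    proof -
      have "coords (fst y i) \<bullet> dual_frame_apply (R$1) (R$2) (R$3) (coords (snd x j)) =
          coords (fst x i) \<bullet> coords (snd x j)"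
        using frame_dual_pairing[OF d, of "coords (fst x i)" "coords (snd x j)"] R
        by (simp add: frame_apply_rows)
      also have "\<dots> = coords (fst y i) \<bullet> coords (snd y j)"
        using transfer_pairing[OF x y r R, of "coords (fst x i)" j] R by simp
      finally show ?thesis by (simp add: inner_diff_right)
    qed
    obtain l where l: "?w = (\<Sum>i\<in>UNIV. l i *\<^sub>R coords (fst y i))" using SF2_a_vectors_span[OF y' r] by blast
    have "?w \<bullet> ?w = 0" by (subst (1) l) (simp add: inner_sum_left o)
    then show ?thesis by simp
  qed
  have "fst y i = sym_of (coords (fst y i))" "snd y j = sym_of (coords (snd y j))" for i j
    using SF2_coords(3,4)[OF y'] by blast+
  then show ?thesis using R b by (simp add: frame_transform_def frame_apply_rows prod_eq_iff fun_eq_iff)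
qed

section \<open>A path between two normalized factorizations\<close>

lemma lform_std: "lform (vector [1, 0, 0]) (vector [0, 1, 0]) (vector [0, 0, 1]) z z = (z$1)\<^sup>2 - (z$2)\<^sup>2 - (z$3)\<^sup>2"
  by (simp add: lform_def inner3 power2_eq_square)

lemma lform_rows: "lform (R$1) (R$2) (R$3) z z = ((R *v z)$1)\<^sup>2 - ((R *v z)$2)\<^sup>2 - ((R *v z)$3)\<^sup>2"
  by (simp add: lform_def matrix_vector_mul_component power2_eq_square)

lemma in_cone_lform_std:
  "in_cone w \<longleftrightarrow> 0 \<le> vector [1, 0, 0] \<bullet> w \<and> 0 \<le> lform (vector [1, 0, 0]) (vector [0, 1, 0]) (vector [0, 0, 1]) w w"
  by (simp add: in_cone_def lform_std inner3) linarith

lemma in_cone_lform_rows: "in_cone (R *v w) \<longleftrightarrow> 0 \<le> R$1 \<bullet> w \<and> 0 \<le> lform (R$1) (R$2) (R$3) w w"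
  by (simp add: in_cone_def lform_rows matrix_vector_mul_component) linarith

text \<open>A transfer map between normalized factorizations fixes the time axis e1 = sum_i a_i.\<close>
lemma transfer_fixes_e1:
  fixes A0 A1 :: "'p::finite \<Rightarrow> real^2^2"
  assumes "unit_sum A0" "unit_sum A1" and R: "\<forall>i. R *v coords (A0 i) = coords (A1 i)"
  shows "R *v vector [1, 0, 0] = vector [1, 0, 0]"
  using assms unfolding unit_sum_def by (metis (no_types) R matrix_vector_sum[OF finite] sum.cong)

lemma dual_cone_of_b_vectors:
  fixes M :: "real^'q^'p"
  assumes x: "x \<in> SF2 M" and r: "rank M = 3" and D: "D = {z. \<forall>j. 0 \<le> z \<bullet> coords (snd x j)}"
  shows "closed D" "\<And>z. z \<in> D \<Longrightarrow> -z \<in> D \<Longrightarrow> z = 0" "\<And>z. in_cone z \<Longrightarrow> z \<in> D"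
proof -
  have x': "(fst x, snd x) \<in> SF2 M" using x by simp
  have "D = (\<Inter>j. {z. 0 \<le> coords (snd x j) \<bullet> z})" by (auto simp: D inner_commute)
  then show "closed D" by (simp add: closed_INT closed_halfspace_ge)
  show "z = 0" if "z \<in> D" "- z \<in> D" for z
  proof -
    have "\<forall>j. coords (snd x j) \<bullet> z = 0" using that by (auto simp: D inner_commute intro: antisym)
    then show ?thesis using SF2_b_vectors_nondegenerate[OF x' r] by blast
  qed
  show "z \<in> D" if "in_cone z" for z
    using that SF2_coords(2)[OF x'] in_cone_inner_nonneg by (simp add: D)
qed

text \<open>Two normalized factorizations related as in normal_form_pair give an instance of the segment
  construction, with the standard frame, the frame of rows of R, and D the dual cone of the
  b-vectors of the first factorization.\<close>
lemma form_segment_for_pair: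
  fixes M :: "real^'q^'p"
  assumes r: "rank M = 3" and x: "x \<in> SF2 M" and y: "y \<in> SF2 M"
    and sx: "unit_sum (fst x)" and sy: "unit_sum (fst y)"
    and R: "\<forall>i. R *v coords (fst x i) = coords (fst y i)"
    and R32: "R$3$2 = 0" and R22: "0 \<le> R$2$2" and R33: "0 \<le> R$3$3"
    and D: "D = {z. \<forall>j. 0 \<le> z \<bullet> coords (snd x j)}"
  shows "form_segment (vector [1, 0, 0]) (vector [0, 1, 0]) (vector [0, 0, 1]) (R$1) (R$2) (R$3)
    (vector [1, 0, 0]) (vector [0, 1, 0]) (vector [0, 0, 1]) D"
proof -
  note Dprops = dual_cone_of_b_vectors[OF x r D]
  have y': "(fst y, snd y) \<in> SF2 M" using y by simp
  have Re1: "R *v vector [1, 0, 0] = vector [1, 0, 0]" by (rule transfer_fixes_e1[OF sx sy R])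
  have sg1: "z \<in> D \<or> - z \<in> D" if "0 \<le> lform (R$1) (R$2) (R$3) z z" for z
  proof -
    have "R *v (- z) = - (R *v z)" using matrix_vector_mult_scaleR[of R "-1" z] by simp
    then have "in_cone (R *v z) \<or> in_cone (R *v (- z))"
      using that in_cone_or_neg[of "R *v z"] by (simp add: lform_rows)
    then have "(\<forall>j. 0 \<le> (R *v z) \<bullet> coords (snd y j)) \<or> (\<forall>j. 0 \<le> (R *v (- z)) \<bullet> coords (snd y j))"
      using SF2_coords(2)[OF y'] in_cone_inner_nonneg by blast
    then show ?thesis using transfer_pairing[OF x y r R] by (simp add: D)
  qed
  have sg0: "z \<in> D \<or> - z \<in> D" if "0 \<le> lform (vector [1, 0, 0]) (vector [0, 1, 0]) (vector [0, 0, 1]) z z" for z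
    using that in_cone_or_neg[of z] Dprops(3) unfolding lform_std by fastforce
  have e1D: "vector [1, 0, 0] \<in> D" by (rule Dprops(3)) (simp add: in_cone_def)
  have "0 \<in> D" by (simp add: D)
  moreover have "R$1 \<bullet> vector [1, 0, 0] = 1" "R$2 \<bullet> vector [1, 0, 0] = 0" "R$3 \<bullet> vector [1, 0, 0] = 0"
    using Re1 by (simp_all add: vec3_eq_iff matrix_vector_mul_component)
  moreover have "p = 0 \<and> q = 0 \<and> s = 0"
    if "p *\<^sub>R vector [1, 0, 0] + q *\<^sub>R vector [0, 1, 0] + s *\<^sub>R vector [0, 0, 1] = (0::real^3)" for p q s
    using that by (simp add: vec3_eq_iff)
  moreover have "\<exists>p q s. z = p *\<^sub>R vector [1, 0, 0] + q *\<^sub>R vector [0, 1, 0] + s *\<^sub>R vector [0, 0, 1]"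
    for z :: "real^3"
    by (intro exI[of _ "z$1"] exI[of _ "z$2"] exI[of _ "z$3"]) (simp add: vec3_eq_iff)
  ultimately show ?thesis
    unfolding form_segment_def using Dprops(1,2) e1D sg0 sg1 R32 R22 R33 by (simp add: inner3)
qed

text \<open>Two normalized factorizations related as in normal_form_pair are joined by a path in SF(M):
  transform the first one by the Gram-Schmidt frames of the segment of forms.\<close>
lemma path_between_normal_forms:
  fixes M :: "real^'q^'p"
  assumes r: "rank M = 3" and x: "x \<in> SF2 M" and y: "y \<in> SF2 M"
    and sx: "unit_sum (fst x)" and sy: "unit_sum (fst y)"
    and R: "\<forall>i. R *v coords (fst x i) = coords (fst y i)"
    and R32: "R$3$2 = 0" and R22: "0 \<le> R$2$2" and R33: "0 \<le> R$3$3"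
  shows "\<exists>T. connected T \<and> T \<subseteq> SF2 M \<and> x \<in> T \<and> y \<in> T"
proof -
  define D where "D = {z. \<forall>j. 0 \<le> z \<bullet> coords (snd x j)}"
  interpret S: form_segment "vector [1, 0, 0]" "vector [0, 1, 0]" "vector [0, 0, 1]" "R$1" "R$2" "R$3"
      "vector [1, 0, 0]" "vector [0, 1, 0]" "vector [0, 0, 1]" D
    by (rule form_segment_for_pair[OF r x y sx sy R R32 R22 R33 D_def])
  have det: "S.aT t \<bullet> cross3 (S.bT t) (S.cT t) \<noteq> 0" if "0 \<le> t" "t \<le> 1" for t
    by (intro frame_det_nonzero S.frame_independent[OF that]) auto
  define P where "P t = frame_transform (S.aT t) (S.bT t) (S.cT t) x" for t
  have "P t \<in> SF2 M" if t: "0 \<le> t" "t \<le> 1" for t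
    unfolding P_def
  proof (rule frame_transform_SF2[OF x det[OF t]])
    fix i
    let ?v = "coords (fst x i)"
    have "in_cone ?v" "in_cone (R *v ?v)"
      using SF2_coords(1)[of "fst x" "snd x"] SF2_coords(1)[of "fst y" "snd y"] x y R by auto
    then have "0 \<le> S.aT t \<bullet> ?v \<and> 0 \<le> S.Gt t ?v ?v"
      unfolding in_cone_lform_std[of ?v] in_cone_lform_rows[of R ?v]
      by (intro S.future_cone_interpolates[OF t]) blast+
    then show "0 \<le> S.aT t \<bullet> ?v \<and> 0 \<le> lform (S.aT t) (S.bT t) (S.cT t) ?v ?v"
      by (simp add: S.Gt_frame_decomposition[OF t])
  next
    fix z j assume "0 \<le> S.aT t \<bullet> z" "0 \<le> lform (S.aT t) (S.bT t) (S.cT t) z z"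
    then have "z \<in> D" using S.future_cone_in_D[OF t] S.Gt_frame_decomposition[OF t] by simp
    then show "0 \<le> z \<bullet> coords (snd x j)" by (simp add: D_def)
  qed
  moreover have "continuous_on {0..1} P"
    unfolding P_def using S.frame_continuous det by (intro frame_transform_continuous) auto
  moreover have "P 0 = x" "P 1 = y"
    using S.frame_endpoints frame_transform_std[OF x] frame_transform_rows[OF x y r R] det[of 1]
    by (simp_all add: P_def)
  ultimately show ?thesis
    by (intro exI[of _ "P ` {0..1}"]) (auto intro: connected_continuous_image image_eqI)
qed

theorem proposition7p9:
  fixes M :: "real^'q^'p"
  assumes "\<forall>i j. 0 \<le> M $ i $ j"
    and "psd_rank M = 2"
    and "rank M = 3"
  shows "connected_space (SF2_mod_GL2 M)"
  unfolding SF2_mod_GL2_def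
proof (rule connected_space_quotient_topology)
  show "equiv (topspace (top_of_set (SF2 M))) (GL2_orbit_rel M)"
    by (simp add: equiv_GL2_orbit_rel)
  fix x y assume "x \<in> topspace (top_of_set (SF2 M))" "y \<in> topspace (top_of_set (SF2 M))"
  then have x: "x \<in> SF2 M" and y: "y \<in> SF2 M" by simp_all
  obtain x' y' R where orbits: "(x, x') \<in> GL2_orbit_rel M" "(y, y') \<in> GL2_orbit_rel M"
    and normal: "unit_sum (fst x')" "unit_sum (fst y')" "\<forall>i. R *v coords (fst x' i) = coords (fst y' i)"
      "R$3$2 = 0" "0 \<le> R$2$2" "0 \<le> R$3$3"
    using normal_form_pair[OF x y \<open>rank M = 3\<close>] by blast
  have "x' \<in> SF2 M" "y' \<in> SF2 M" using orbits by (auto simp: GL2_orbit_rel_def)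
  then obtain T where "connected T" "T \<subseteq> SF2 M" "x' \<in> T" "y' \<in> T"
    using path_between_normal_forms[OF \<open>rank M = 3\<close> _ _ normal] by blast
  then show "\<exists>T. connectedin (top_of_set (SF2 M)) T \<and> (\<exists>x'\<in>T. (x, x') \<in> GL2_orbit_rel M) \<and>
      (\<exists>y'\<in>T. (y, y') \<in> GL2_orbit_rel M)"
    using orbits by (intro exI[of _ T]) (auto simp: connectedin_subtopology)
qed

end
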